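(* Let $\mathcal{G}$ be a 2-player finite game, let $y(t)$ solve $\dot y_k=v_k(Q(y))$, $k=1,2$, and let $x(t)=Q(y(t))$. Then the $\omega$-limit set of the time average $\bar x(t)=t^{-1}\int_0^tx(s)\,ds$ is internally chain transitive under the best response dynamics $\dot x_k\in\mathtt{br}_k(x)-x_k$, $k=1,2$.
   Context: Setting: finite game with players $\{1,2\}$, action sets $\mathcal{A}_k$, mixed strategies $\mathcal{X}_k=\Delta(\mathcal{A}_k)$, $\mathcal{X}=\mathcal{X}_1\times\mathcal{X}_2$, bilinear expected payoffs $u_k$, payoff vectors $v_k(x)=(u_k(\alpha;x_{-k}))_{\alpha\in\mathcal{A}_k}$. Each player has a penalty function $h_k$ on $\mathcal{X}_k$ (continuous, $C^\infty$ on relative interiors of faces, strongly convex: $h(tx_1+(1-t)x_2)\le th(x_1)+(1-t)h(x_2)-\tfrac12Kt(1-t)\|x_1-x_2\|^2$, $K>0$), with choice map $Q_k(y_k)=\arg\max_{x_k\in\mathcal{X}_k}\{\langle y_k,x_k\rangle-h_k(x_k)\}$. The best response correspondence is $\mathtt{br}_k(x)=\arg\max_{x_k'\in\mathcal{X}_k}\langle v_k(x),x_k'\rangle$. A compact set $L\subseteq\mathcal{X}$ is internally chain transitive for a differential inclusion if for all $x,z\in L$, $\varepsilon>0$, $T>0$ there exist $n\ge1$, solutions $z_1,\dots,z_n$ of the inclusion and times $t_1,\dots,t_n\ge T$ with $z_i([0,t_i])\subseteq L$, $\|z_i(t_i)-z_{i+1}(0)\|\le\varepsilon$ for $i<n$,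 $\|z_1(0)-x\|\le\varepsilon$ and $\|z_n(t_n)-z\|\le\varepsilon$. *)

theory Defs
  imports "HOL-Analysis.Analysis"
begin

definition mixed_strats :: "(real^'a::finite) set" where
  "mixed_strats = {x. (\<forall>i. 0 \<le> x$i) \<and> (\<Sum>i\<in>UNIV. x$i) = 1}"

text \<open>C-infinity on an open set U: there is a family D of iterated partial derivatives
  (D [] = f) such that each D ds is continuous and Frechet differentiable on U with
  partial derivatives D (b # ds), b in Basis.\<close>
definition smooth_on :: "'v::euclidean_space set \<Rightarrow> ('v \<Rightarrow> real) \<Rightarrow> bool" where
  "smooth_on U f \<longleftrightarrow> (\<exists>D :: 'v list \<Rightarrow> 'v \<Rightarrow> real.
      (\<forall>x\<in>U. D [] x = f x) \<and>
      (\<forall>ds. continuous_on U (D ds) \<and>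
         (\<forall>x\<in>U. (D ds has_derivative (\<lambda>h. \<Sum>b\<in>Basis. (h \<bullet> b) * D (b # ds) x)) (at x))))"

text \<open>Penalty function: continuous on the mixed_strats, smooth on the relative interior
  of every face (relative to the face's affine hull, expressed via a smooth extension
  to an open neighbourhood), and strongly convex with modulus K > 0.\<close>
definition penalty :: "(real^'a::finite \<Rightarrow> real) \<Rightarrow> bool" where
  "penalty h \<longleftrightarrow> continuous_on mixed_strats h \<and>
     (\<forall>F. F face_of mixed_strats \<longrightarrow>
        (\<exists>U g. open U \<and> rel_interior F \<subseteq> U \<and> smooth_on U g \<and>
               (\<forall>x\<in>rel_interior F. g x = h x))) \<and>
     (\<exists>K>0. \<forall>x1\<in>mixed_strats. \<forall>x2\<in>mixed_strats. \<forall>t\<in>{0..1::real}.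
        h (t *\<^sub>R x1 + (1 - t) *\<^sub>R x2) \<le> t * h x1 + (1 - t) * h x2
           - 1/2 * K * t * (1 - t) * (norm (x1 - x2))\<^sup>2)"

definition choice :: "(real^'a::finite \<Rightarrow> real) \<Rightarrow> real^'a \<Rightarrow> real^'a" where
  "choice h y = (THE x. x \<in> mixed_strats \<and> (\<forall>x'\<in>mixed_strats. y \<bullet> x' - h x' \<le> y \<bullet> x - h x))"

definition payvec1 :: "('a::finite \<Rightarrow> 'b::finite \<Rightarrow> real) \<Rightarrow> real^'b \<Rightarrow> real^'a" where
  "payvec1 A x2 = (\<chi> a. \<Sum>b\<in>UNIV. A a b * x2$b)"

definition payvec2 :: "('a::finite \<Rightarrow> 'b::finite \<Rightarrow> real) \<Rightarrow> real^'a \<Rightarrow> real^'b" where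
  "payvec2 B x1 = (\<chi> b. \<Sum>a\<in>UNIV. B a b * x1$a)"

definition best_resp :: "real^'a::finite \<Rightarrow> (real^'a) set" where
  "best_resp v = {p\<in>mixed_strats. \<forall>p'\<in>mixed_strats. v \<bullet> p' \<le> v \<bullet> p}"

definition br_field :: "('a::finite \<Rightarrow> 'b::finite \<Rightarrow> real) \<Rightarrow> ('a \<Rightarrow> 'b \<Rightarrow> real)
     \<Rightarrow> ((real^'a) \<times> (real^'b)) \<Rightarrow> ((real^'a) \<times> (real^'b)) set" where
  "br_field A B x = {(p1 - fst x, p2 - snd x) | p1 p2.
      p1 \<in> best_resp (payvec1 A (snd x)) \<and> p2 \<in> best_resp (payvec2 B (fst x))}"

text \<open>Solution of the differential inclusion z' \<in> F(z) on [0,t]: z is absolutely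
  continuous, i.e. z(s) = z(0) + integral of an absolutely integrable w over [0,s],
  and w(s) \<in> F(z(s)) for almost every s in [0,t].\<close>
definition incl_solution :: "('v::euclidean_space \<Rightarrow> 'v set) \<Rightarrow> (real \<Rightarrow> 'v) \<Rightarrow> real \<Rightarrow> bool" where
  "incl_solution F z t \<longleftrightarrow> 0 \<le> t \<and> (\<exists>w N. w absolutely_integrable_on {0..t} \<and>
      (\<forall>s\<in>{0..t}. (w has_integral (z s - z 0)) {0..s}) \<and>
      negligible N \<and> (\<forall>s\<in>{0..t} - N. w s \<in> F (z s)))"

definition internally_chain_transitive :: "('v::euclidean_space \<Rightarrow> 'v set) \<Rightarrow> 'v set \<Rightarrow> bool" where
  "internally_chain_transitive F L \<longleftrightarrow> compact L \<and>
     (\<forall>x\<in>L. \<forall>z\<in>L. \<forall>\<epsilon>>0. \<forall>T>0. \<exists>n\<ge>1. \<exists>zs :: nat \<Rightarrow> real \<Rightarrow> 'v. \<exists>ts :: nat \<Rightarrow> real.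
        (\<forall>i\<in>{1..n}. incl_solution F (zs i) (ts i) \<and> T \<le> ts i \<and> zs i ` {0..ts i} \<subseteq> L) \<and>
        (\<forall>i\<in>{1..<n}. norm (zs i (ts i) - zs (Suc i) 0) \<le> \<epsilon>) \<and>
        norm (zs 1 0 - x) \<le> \<epsilon> \<and> norm (zs n (ts n) - z) \<le> \<epsilon>)"

definition omega_limit :: "(real \<Rightarrow> 'v::real_normed_vector) \<Rightarrow> 'v set" where
  "omega_limit f = {p. \<exists>s :: nat \<Rightarrow> real. filterlim s at_top sequentially \<and>
                        (\<lambda>n. f (s n)) \<longlonglongrightarrow> p}"

end

theory Submission
  imports Defs "HOL-Complex_Analysis.Great_Picard"
begin

text \<open>In logarithmic time the time average \<open>U(s) = x_avg(e\<^sup>s)\<close> satisfies \<open>U' = \<xi> - U\<close>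
  with \<open>\<xi>(s) = x(e\<^sup>s)\<close>. Since \<open>y(t) = y(0) + t v(x_avg(t))\<close>, strong convexity of the
  penalties makes \<open>\<xi>(s) = Q(y(e\<^sup>s))\<close> an \<open>O(e\<^sup>-\<^sup>s)\<close>-best response to \<open>U(s)\<close>.
  By Arzela--Ascoli the shifts \<open>U(s\<^sub>n + \<cdot>)\<close> have uniformly convergent subsequences, and
  every limit \<open>Z\<close> solves the best response inclusion: \<open>Z' = \<zeta> - Z\<close>, where the cumulative
  integrals of the components of \<open>\<zeta>\<close> are limits of those of \<open>\<xi>(s\<^sub>n + \<cdot>)\<close>, hence
  monotone and 1-Lipschitz; so \<open>\<zeta>\<close> exists by Radon--Nikodym, is a mixed strategy almost
  everywhere, and charges no action that is suboptimal against \<open>Z\<close>. Thus late windows of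
  \<open>U\<close> are shadowed by solutions lying in its limit set, and the limit set of such an
  asymptotic pseudo-trajectory is internally chain transitive.\<close>

section \<open>Mixed strategies and best responses\<close>

lemma mixed_strats_nonneg: "x \<in> mixed_strats \<Longrightarrow> 0 \<le> x $ i"
  by (simp add: mixed_strats_def)

lemma mixed_strats_sum: "x \<in> mixed_strats \<Longrightarrow> (\<Sum>i\<in>UNIV. x $ i) = 1"
  by (simp add: mixed_strats_def)

lemma mixed_strats_le_1: "x \<in> mixed_strats \<Longrightarrow> x $ i \<le> 1"
  using member_le_sum[of i UNIV "\<lambda>j. x $ j"] by (simp add: mixed_strats_nonneg mixed_strats_sum)

lemma norm_mixed_strats_le_1: "x \<in> mixed_strats \<Longrightarrow> norm x \<le> 1"
  using norm_le_l1_cart[of x] by (simp add: mixed_strats_nonneg mixed_strats_sum)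

lemma compact_mixed_strats: "compact (mixed_strats :: (real^'a::finite) set)"
proof -
  have "mixed_strats = (\<Inter>i. {x::real^'a. 0 \<le> x $ i}) \<inter> {x. (\<Sum>i\<in>UNIV. x $ i) = 1}"
    by (auto simp: mixed_strats_def)
  moreover have "closed {x::real^'a. (\<Sum>i\<in>UNIV. x $ i) = 1}" "closed {x::real^'a. 0 \<le> x $ i}" for i
    by (intro closed_Collect_eq closed_Collect_le continuous_intros)+
  ultimately have "closed (mixed_strats :: (real^'a) set)"
    by (metis closed_INT closed_Int)
  moreover have "bounded (mixed_strats :: (real^'a) set)"
    unfolding bounded_iff using norm_mixed_strats_le_1 by blast
  ultimately show ?thesis by (simp add: compact_eq_bounded_closed)
qed

lemma convex_mixed_strats: "convex (mixed_strats :: (real^'a::finite) set)"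
  unfolding convex_def mixed_strats_def
  by (auto simp: sum.distrib sum_distrib_left[symmetric])

lemma mixed_strats_nonempty: "(mixed_strats :: (real^'a::finite) set) \<noteq> {}"
proof -
  have "(\<chi> i. 1 / real CARD('a)) \<in> (mixed_strats :: (real^'a) set)"
    by (simp add: mixed_strats_def)
  then show ?thesis by blast
qed

lemma has_integral_average_in_mixed_strats:
  fixes f :: "real \<Rightarrow> real^'a::finite"
  assumes I: "(f has_integral I) {a..b}" and "a < b"
    and f: "\<And>s. s \<in> {a..b} \<Longrightarrow> f s \<in> mixed_strats"
  shows "(1 / (b - a)) *\<^sub>R I \<in> mixed_strats"
proof -
  have comp: "((\<lambda>s. f s $ i) has_integral I $ i) {a..b}" for i
    using has_integral_linear[OF I bounded_linear_vec_nth[of i]] by (simp add: o_def)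
  have nonneg: "0 \<le> I $ i" for i
    by (rule has_integral_nonneg[OF comp]) (use f mixed_strats_nonneg in auto)
  have "((\<lambda>s. \<Sum>i\<in>UNIV. f s $ i) has_integral (\<Sum>i\<in>UNIV. I $ i)) {a..b}"
    by (rule has_integral_sum) (auto intro: comp)
  moreover have "((\<lambda>s. \<Sum>i\<in>UNIV. f s $ i) has_integral (b - a)) {a..b}"
  proof -
    have "((\<lambda>s. 1::real) has_integral (b - a)) {a..b}"
      using has_integral_const_real[of "1::real" a b] \<open>a < b\<close> by simp
    then show ?thesis
      by (rule has_integral_spike_eq[where S="{}", THEN iffD1, rotated -1])
         (use f mixed_strats_sum in auto)
  qed
  ultimately have "(\<Sum>i\<in>UNIV. I $ i) = b - a" by (rule has_integral_unique)
  then show ?thesis using nonneg \<open>a < b\<close>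
    by (auto simp: mixed_strats_def sum_divide_distrib[symmetric])
qed

text \<open>Shifting the mass that \<open>\<xi>\<close> puts on the action \<open>c\<close> over to \<open>c'\<close> gains
  \<open>\<xi>$c * (v$c' - v$c)\<close>.\<close>

lemma approx_best_resp_mass_bound:
  fixes \<xi> v :: "real^'c::finite"
  assumes \<xi>: "\<xi> \<in> mixed_strats" and "c \<noteq> c'"
    and approx: "\<And>p. p \<in> mixed_strats \<Longrightarrow> v \<bullet> p - v \<bullet> \<xi> \<le> \<delta>"
  shows "\<xi> $ c * (v $ c' - v $ c) \<le> \<delta>"
proof -
  define p where "p = \<xi> + (\<xi> $ c) *\<^sub>R (axis c' 1 - axis c 1)"
  have p: "p \<in> mixed_strats"
    unfolding mixed_strats_def
  proof (intro CollectI conjI allI)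
    show "0 \<le> p $ d" for d
      using mixed_strats_nonneg[OF \<xi>, of d] mixed_strats_nonneg[OF \<xi>, of c] \<open>c \<noteq> c'\<close>
      by (auto simp: p_def axis_def)
    have "(\<Sum>d\<in>UNIV. (axis e (1::real) :: real^'c) $ d) = 1" for e
      by (simp add: axis_def)
    then show "(\<Sum>i\<in>UNIV. p $ i) = 1"
      using mixed_strats_sum[OF \<xi>]
      by (simp add: p_def sum.distrib sum_subtractf sum_distrib_left[symmetric])
  qed
  moreover have "v \<bullet> p - v \<bullet> \<xi> = \<xi> $ c * (v $ c' - v $ c)"
    by (simp add: p_def inner_add_right inner_diff_right inner_axis algebra_simps)
  ultimately show ?thesis using approx[OF p] by simp
qed

lemma best_resp_if_support_maximal:
  fixes p v :: "real^'c::finite"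
  assumes p: "p \<in> mixed_strats" and support: "\<And>c c'. p $ c \<noteq> 0 \<Longrightarrow> v $ c' \<le> v $ c"
  shows "p \<in> best_resp v"
proof -
  obtain c0 where c0: "p $ c0 \<noteq> 0"
  proof (rule ccontr)
    assume "\<not> thesis"
    then have "\<forall>c. p $ c = 0" using that by blast
    then show False using mixed_strats_sum[OF p] by simp
  qed
  have eq: "v $ c * p $ c = v $ c0 * p $ c" for c
  proof (cases "p $ c = 0")
    case False
    then show ?thesis using support[OF False, of c0] support[OF c0, of c] by simp
  qed simp
  have vp: "v \<bullet> p = v $ c0"
    using mixed_strats_sum[OF p] by (simp add: inner_vec_def eq sum_distrib_left[symmetric])
  have "v \<bullet> p' \<le> v \<bullet> p" if p': "p' \<in> mixed_strats" for p'
  proof -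
    have "v \<bullet> p' = (\<Sum>c\<in>UNIV. v $ c * p' $ c)" by (simp add: inner_vec_def)
    also have "\<dots> \<le> (\<Sum>c\<in>UNIV. v $ c0 * p' $ c)"
      by (rule sum_mono) (use support[OF c0] mixed_strats_nonneg[OF p'] in \<open>auto intro: mult_right_mono\<close>)
    also have "\<dots> = v $ c0" using mixed_strats_sum[OF p'] by (simp add: sum_distrib_left[symmetric])
    finally show ?thesis using vp by simp
  qed
  then show ?thesis using p by (simp add: best_resp_def)
qed

lemma bounded_linear_payvec1: "bounded_linear (payvec1 A)"
  unfolding linear_conv_bounded_linear[symmetric]
  by (rule linearI) (auto simp: payvec1_def vec_eq_iff sum.distrib algebra_simps sum_distrib_left)

lemma bounded_linear_payvec2: "bounded_linear (payvec2 B)"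
  unfolding linear_conv_bounded_linear[symmetric]
  by (rule linearI) (auto simp: payvec2_def vec_eq_iff sum.distrib algebra_simps sum_distrib_left)

lemma uniform_payoff_gap:
  fixes w :: "real \<Rightarrow> real^'c::finite"
  assumes "continuous_on {a..b} w" "a \<le> b" and gap: "\<And>r. r \<in> {a..b} \<Longrightarrow> \<exists>c'. w r $ c < w r $ c'"
  obtains \<eta> where "\<eta> > 0" "\<And>r. r \<in> {a..b} \<Longrightarrow> \<exists>c'. \<eta> \<le> w r $ c' - w r $ c"
proof -
  define m where "m r = (\<Sum>c'\<in>UNIV. max 0 (w r $ c' - w r $ c))" for r
  have "continuous_on {a..b} (\<lambda>r. w r $ d)" for d
    using bounded_linear.continuous_on[OF bounded_linear_vec_nth assms(1)] .
  then have m: "continuous_on {a..b} m"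
    unfolding m_def[abs_def] by (intro continuous_intros) (use assms(1) in auto)
  then obtain r0 where r0: "r0 \<in> {a..b}" "\<And>r. r \<in> {a..b} \<Longrightarrow> m r0 \<le> m r"
    using continuous_attains_inf[OF compact_Icc _ m] assms(2) by auto
  have "m r0 > 0"
  proof -
    obtain c' where "w r0 $ c < w r0 $ c'" using gap[OF r0(1)] by blast
    then show ?thesis unfolding m_def by (intro sum_pos2[of UNIV c']) auto
  qed
  define k where "k = real CARD('c)"
  have "k \<ge> 1" by (simp add: k_def)
  show ?thesis
  proof
    show "m r0 / k > 0" using \<open>m r0 > 0\<close> \<open>k \<ge> 1\<close> by simp
    show "\<exists>c'. m r0 / k \<le> w r $ c' - w r $ c" if r: "r \<in> {a..b}" for r
    proof (rule ccontr)
      assume "\<not> ?thesis"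
      then have "max 0 (w r $ c' - w r $ c) < m r0 / k" for c'
        using \<open>m r0 > 0\<close> \<open>k \<ge> 1\<close> by (auto simp: not_le)
      then have "m r < real CARD('c) * (m r0 / k)"
        unfolding m_def by (intro sum_bounded_above_strict) auto
      then show False using r0(2)[OF r] by (simp add: k_def)
    qed
  qed
qed

section \<open>The choice map\<close>

definition strongly_convex_on :: "'v::real_normed_vector set \<Rightarrow> real \<Rightarrow> ('v \<Rightarrow> real) \<Rightarrow> bool" where
  "strongly_convex_on S K h \<longleftrightarrow> (\<forall>x1\<in>S. \<forall>x2\<in>S. \<forall>t\<in>{0..1}.
     h (t *\<^sub>R x1 + (1 - t) *\<^sub>R x2) \<le> t * h x1 + (1 - t) * h x2 - 1/2 * K * t * (1 - t) * (norm (x1 - x2))\<^sup>2)"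

lemma penalty_strongly_convex:
  assumes "penalty h"
  obtains K where "K > 0" "strongly_convex_on mixed_strats K h"
  using assms unfolding penalty_def strongly_convex_on_def by blast

text \<open>Compare the maximiser \<open>q\<close> with the midpoint of \<open>q\<close> and \<open>q'\<close>.\<close>

lemma strongly_convex_argmax_gap:
  fixes h :: "'v::real_inner \<Rightarrow> real"
  assumes "convex S" "strongly_convex_on S K h"
    and q: "q \<in> S" "\<And>x. x \<in> S \<Longrightarrow> y \<bullet> x - h x \<le> y \<bullet> q - h q" and "q' \<in> S"
  shows "K/4 * (norm (q - q'))\<^sup>2 \<le> (y \<bullet> q - h q) - (y \<bullet> q' - h q')"
proof -
  define m where "m = (1/2::real) *\<^sub>R q + (1 - 1/2) *\<^sub>R q'"
  define d where "d = K * (norm (q - q'))\<^sup>2"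
  have "m \<in> S" unfolding m_def using assms by (intro convexD) auto
  then have "y \<bullet> m - h m \<le> y \<bullet> q - h q" by (rule q(2))
  moreover have "h m \<le> 1/2 * h q + 1/2 * h q' - d/8"
  proof -
    have "\<forall>t\<in>{0..1}. h (t *\<^sub>R q + (1 - t) *\<^sub>R q')
        \<le> t * h q + (1 - t) * h q' - 1/2 * K * t * (1 - t) * (norm (q - q'))\<^sup>2"
      using assms(2) q(1) \<open>q' \<in> S\<close> unfolding strongly_convex_on_def by blast
    then show ?thesis unfolding m_def d_def by (drule_tac bspec[of _ _ "1/2"]) auto
  qed
  moreover have "y \<bullet> m = 1/2 * (y \<bullet> q) + 1/2 * (y \<bullet> q')"
    unfolding m_def by (simp add: inner_add_right)
  ultimately have "d/4 \<le> (y \<bullet> q - h q) - (y \<bullet> q' - h q')" by linarith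
  then show ?thesis by (simp add: d_def)
qed

lemma choice_argmax:
  fixes h :: "real^'a::finite \<Rightarrow> real"
  assumes "penalty h"
  shows "choice h y \<in> mixed_strats"
    and "\<And>x. x \<in> mixed_strats \<Longrightarrow> y \<bullet> x - h x \<le> y \<bullet> choice h y - h (choice h y)"
proof -
  obtain K where K: "K > 0" "strongly_convex_on mixed_strats K h"
    using penalty_strongly_convex[OF assms] .
  have "continuous_on mixed_strats (\<lambda>x. y \<bullet> x - h x)"
    using assms unfolding penalty_def by (intro continuous_intros) auto
  then obtain q where q: "q \<in> mixed_strats" "\<And>x. x \<in> mixed_strats \<Longrightarrow> y \<bullet> x - h x \<le> y \<bullet> q - h q"
    using continuous_attains_sup[OF compact_mixed_strats mixed_strats_nonempty] by blast
  have unique: "q' = q" if "q' \<in> mixed_strats" "\<forall>x\<in>mixed_strats. y \<bullet> x - h x \<le> y \<bullet> q' - h q'" for q'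
  proof -
    have "(y \<bullet> q - h q) - (y \<bullet> q' - h q') \<le> 0"
      using that(2) q(1) by auto
    then have "K/4 * (norm (q - q'))\<^sup>2 \<le> 0"
      using strongly_convex_argmax_gap[OF convex_mixed_strats K(2) q that(1)] by linarith
    then show ?thesis
      using K(1) by (simp add: mult_le_0_iff)
  qed
  have "choice h y = q"
    unfolding choice_def by (rule the_equality) (use q unique in blast)+
  then show "choice h y \<in> mixed_strats"
    and "\<And>x. x \<in> mixed_strats \<Longrightarrow> y \<bullet> x - h x \<le> y \<bullet> choice h y - h (choice h y)"
    using q by simp_all
qed

lemma choice_lipschitz:
  fixes h :: "real^'a::finite \<Rightarrow> real"
  assumes "penalty h"
  obtains L where "L-lipschitz_on UNIV (choice h)"
proof -
  obtain K where K: "K > 0" "strongly_convex_on mixed_strats K h"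
    using penalty_strongly_convex[OF assms] .
  have "norm (choice h y1 - choice h y2) \<le> 2/K * norm (y1 - y2)" for y1 y2
  proof -
    let ?q1 = "choice h y1" and ?q2 = "choice h y2"
    note gap = strongly_convex_argmax_gap[OF convex_mixed_strats K(2) choice_argmax[OF assms]
        choice_argmax(1)[OF assms]]
    have "K/2 * (norm (?q1 - ?q2))\<^sup>2 \<le> (y1 - y2) \<bullet> (?q1 - ?q2)"
      using gap[of y1 y2] gap[of y2 y1]
      by (simp add: norm_minus_commute inner_diff_left inner_diff_right)
    also have "\<dots> \<le> norm (y1 - y2) * norm (?q1 - ?q2)" by (rule norm_cauchy_schwarz)
    finally have "K/2 * norm (?q1 - ?q2) * norm (?q1 - ?q2) \<le> norm (y1 - y2) * norm (?q1 - ?q2)"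
      by (simp add: power2_eq_square mult.assoc)
    then have "K/2 * norm (?q1 - ?q2) \<le> norm (y1 - y2)"
      by (cases "?q1 = ?q2") (simp_all add: mult_le_cancel_right)
    then show ?thesis using K(1) by (simp add: field_simps)
  qed
  then have "(2/K)-lipschitz_on UNIV (choice h)"
    using K(1) by (intro lipschitz_onI) (simp_all add: dist_norm)
  then show ?thesis by (rule that)
qed

lemma continuous_on_choice:
  fixes h :: "real^'a::finite \<Rightarrow> real"
  assumes "penalty h"
  shows "continuous_on S (choice h)"
  using choice_lipschitz[OF assms] lipschitz_on_continuous_on continuous_on_subset
  by (metis subset_UNIV)

lemma choice_approx_best_resp:
  fixes h :: "real^'a::finite \<Rightarrow> real"
  assumes h: "penalty h" and M: "\<And>x. x \<in> mixed_strats \<Longrightarrow> \<bar>h x\<bar> \<le> M"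
    and "t > 0" and p: "p \<in> mixed_strats"
  shows "v \<bullet> p - v \<bullet> choice h (y0 + t *\<^sub>R v) \<le> (2 * norm y0 + 2 * M) / t"
proof -
  let ?q = "choice h (y0 + t *\<^sub>R v)"
  have q: "?q \<in> mixed_strats" using choice_argmax(1)[OF h] .
  have "t * (v \<bullet> p - v \<bullet> ?q) \<le> y0 \<bullet> ?q - y0 \<bullet> p + h p - h ?q"
    using choice_argmax(2)[OF h p, where y="y0 + t *\<^sub>R v"] by (simp add: inner_add_left algebra_simps)
  also have "\<dots> \<le> norm y0 * norm ?q + norm y0 * norm p + M + M"
    using norm_cauchy_schwarz[of y0 ?q] norm_cauchy_schwarz[of "-y0" p] M[OF p] M[OF q]
    by simp
  also have "\<dots> \<le> 2 * norm y0 + 2 * M"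
    using norm_mixed_strats_le_1[OF p] norm_mixed_strats_le_1[OF q]
    by (smt (verit, best) mult_left_le norm_ge_zero)
  finally show ?thesis using \<open>t > 0\<close> by (simp add: field_simps)
qed

lemma penalty_bounded:
  assumes "penalty h"
  obtains M where "\<And>x. x \<in> mixed_strats \<Longrightarrow> \<bar>h x\<bar> \<le> M"
proof -
  have "compact (h ` mixed_strats)"
    using assms compact_mixed_strats unfolding penalty_def by (blast intro: compact_continuous_image)
  then obtain M where "\<forall>x\<in>mixed_strats. \<bar>h x\<bar> \<le> M"
    by (auto dest!: compact_imp_bounded simp: bounded_real)
  then show ?thesis using that by blast
qed

section \<open>Densities of monotone Lipschitz functions\<close>

lemma monotone_lipschitz_continuous:
  fixes F :: "real \<Rightarrow> real"
  assumes mono: "\<And>a b. a \<le> b \<Longrightarrow> F a \<le> F b" and lip: "\<And>a b. a \<le> b \<Longrightarrow> F b - F a \<le> b - a"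
  shows "continuous_on UNIV F"
proof (rule lipschitz_on_continuous_on)
  show "1-lipschitz_on UNIV F"
  proof (rule lipschitz_onI)
    show "dist (F x) (F y) \<le> 1 * dist x y" for x y
      using mono[of x y] lip[of x y] mono[of y x] lip[of y x]
      by (cases "x \<le> y") (auto simp: dist_real_def)
  qed simp
qed

lemma emeasure_measure_of_add:
  assumes "sets N = sets M" "A \<in> sets M"
  shows "emeasure (measure_of (space M) (sets M) (\<lambda>A. emeasure M A + emeasure N A)) A
    = emeasure M A + emeasure N A"
proof (rule emeasure_measure_of_sigma[OF sets.sigma_algebra_axioms _ _ assms(2)])
  show "positive (sets M) (\<lambda>A. emeasure M A + emeasure N A)"
    unfolding positive_def by simp
  show "countably_additive (sets M) (\<lambda>A. emeasure M A + emeasure N A)"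
    unfolding countably_additive_def
  proof (intro allI impI)
    fix A :: "nat \<Rightarrow> 'a set"
    assume A: "range A \<subseteq> sets M" "disjoint_family A" "\<Union> (range A) \<in> sets M"
    have "(\<Sum>i. emeasure M (A i) + emeasure N (A i)) = (\<Sum>i. emeasure M (A i)) + (\<Sum>i. emeasure N (A i))"
      by (rule suminf_add[symmetric]) auto
    also have "\<dots> = emeasure M (\<Union> (range A)) + emeasure N (\<Union> (range A))"
      using A assms(1) by (simp add: suminf_emeasure)
    finally show "(\<Sum>i. emeasure M (A i) + emeasure N (A i)) = emeasure M (\<Union> (range A)) + emeasure N (\<Union> (range A))" .
  qed
qed

lemma interval_measure_add_eq_lborel:
  fixes F G :: "real \<Rightarrow> real"
  assumes mono: "\<And>a b. a \<le> b \<Longrightarrow> F a \<le> F b" "\<And>a b. a \<le> b \<Longrightarrow> G a \<le> G b"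
    and cont: "continuous_on UNIV F" "continuous_on UNIV G" and sum: "\<And>x. F x + G x = x"
    and "A \<in> sets borel"
  shows "emeasure (interval_measure F) A + emeasure (interval_measure G) A = emeasure lborel A"
proof -
  have rc: "continuous (at_right a) F" "continuous (at_right a) G" for a
    using cont by (simp_all add: continuous_on_eq_continuous_at continuous_at_imp_continuous_within)
  define K where "K = measure_of UNIV (sets borel)
    (\<lambda>A. emeasure (interval_measure F) A + emeasure (interval_measure G) A)"
  have eK: "emeasure K A = emeasure (interval_measure F) A + emeasure (interval_measure G) A"
    if "A \<in> sets borel" for A
    using emeasure_measure_of_add[of "interval_measure G" "interval_measure F" A] that
    by (simp add: K_def)
  have sets_Ioc: "sets (borel :: real measure) = sigma_sets UNIV (range (\<lambda>(a, b). {a<..b::real}))"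
    by (subst borel_sigma_sets_Ioc) (simp add: sets_measure_of)
  have "K = lborel"
  proof (rule measure_eqI_generator_eq[where E="range (\<lambda>(a, b). {a<..b::real})" and \<Omega>=UNIV
        and A="\<lambda>i. {- real i <.. real i}"])
    show "Int_stable (range (\<lambda>(a, b). {a<..b::real}))"
      unfolding Int_stable_def by (auto simp: Int_greaterThanAtMost image_iff)
    have "sigma_algebra UNIV (sets (borel :: real measure))"
      using sets.sigma_algebra_axioms[of borel] by simp
    then have "sets K = sets borel"
      unfolding K_def by (simp add: sets_measure_of sigma_algebra.sigma_sets_eq)
    then show "sets K = sigma_sets UNIV (range (\<lambda>(a, b). {a<..b::real}))"
      using sets_Ioc by simp
    show "sets lborel = sigma_sets UNIV (range (\<lambda>(a, b). {a<..b::real}))" using sets_Ioc by simp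
    show "range (\<lambda>i. {- real i<..real i}) \<subseteq> range (\<lambda>(a, b). {a<..b::real})"
      by (auto simp: image_iff)
    show "(\<Union>i. {- real i<..real i}) = UNIV"
    proof (rule set_eqI, simp)
      fix x :: real
      obtain n :: nat where "\<bar>x\<bar> < real n" using reals_Archimedean2 by blast
      then show "\<exists>i. - real i < x \<and> x \<le> real i" by (intro exI[of _ n]) auto
    qed
    fix i :: nat
    show "emeasure K {- real i<..real i} \<noteq> \<infinity>"
      by (simp add: eK emeasure_interval_measure_Ioc_eq[OF mono(1) rc(1)]
                    emeasure_interval_measure_Ioc_eq[OF mono(2) rc(2)])
  next
    fix X assume "X \<in> range (\<lambda>(a, b). {a<..b::real})"
    then obtain a b where X: "X = {a<..b}" by auto
    show "emeasure K X = emeasure lborel X"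
    proof (cases "a \<le> b")
      case True
      have "emeasure K X = ennreal (F b - F a) + ennreal (G b - G a)"
        using True by (simp add: X eK emeasure_interval_measure_Ioc_eq[OF mono(1) rc(1)]
                    emeasure_interval_measure_Ioc_eq[OF mono(2) rc(2)])
      also have "\<dots> = ennreal (b - a)"
        using mono(1)[OF True] mono(2)[OF True] sum[of a] sum[of b]
        by (simp add: ennreal_plus[symmetric] del: ennreal_plus)
      finally show ?thesis using True by (simp add: X)
    qed (simp add: X eK)
  qed (simp_all add: K_def)
  then show ?thesis using eK[OF \<open>A \<in> sets borel\<close>] by simp
qed

lemma interval_measure_absolutely_continuous:
  fixes F :: "real \<Rightarrow> real"
  assumes mono: "\<And>a b. a \<le> b \<Longrightarrow> F a \<le> F b" and lip: "\<And>a b. a \<le> b \<Longrightarrow> F b - F a \<le> b - a"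
  shows "absolutely_continuous lborel (interval_measure F)"
  unfolding absolutely_continuous_def
proof
  fix N :: "real set" assume N: "N \<in> null_sets lborel"
  then have "N \<in> sets borel" by auto
  define G where "G x = x - F x" for x
  have "G a \<le> G b" if "a \<le> b" for a b using lip[OF that] by (simp add: G_def)
  moreover have contF: "continuous_on UNIV F" by (rule monotone_lipschitz_continuous[OF mono lip])
  moreover have "continuous_on UNIV G" unfolding G_def[abs_def] using contF by (intro continuous_intros)
  ultimately have "emeasure (interval_measure F) N + emeasure (interval_measure G) N = emeasure lborel N"
    using \<open>N \<in> sets borel\<close> by (intro interval_measure_add_eq_lborel[OF mono]) (auto simp: G_def)
  then have "emeasure (interval_measure F) N = 0" using N by auto
  then show "N \<in> null_sets (interval_measure F)"
    using \<open>N \<in> sets borel\<close> by (auto simp: null_sets_def)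
qed

lemma negligible_if_AE_lborel:
  assumes "AE x in lborel. P x"
  shows "negligible {x. \<not> P x}"
proof -
  obtain N where N: "N \<in> null_sets lborel" "{x. \<not> P x} \<subseteq> N"
    using assms unfolding eventually_ae_filter by auto
  then show ?thesis
    by (metis negligible_iff_null_sets negligible_subset null_sets_completionI)
qed

lemma has_integral_enn2real_density:
  fixes g :: "real \<Rightarrow> ennreal" and a b :: real
  assumes g: "g \<in> borel_measurable lborel"
    and emeasure: "emeasure (density lborel g) {a..b} = ennreal I" and "0 \<le> I"
  shows "((\<lambda>x. enn2real (g x)) has_integral I) {a..b}"
proof -
  have gI: "(\<integral>\<^sup>+ x. g x * indicator {a..b} x \<partial>lborel) = ennreal I"
    using emeasure_density[OF g, of "{a..b}"] emeasure by simp
  have "AE x in lborel. g x * indicator {a..b} x \<noteq> \<infinity>"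
    by (rule nn_integral_PInf_AE) (use g gI in auto)
  then have "AE x in lborel. ennreal (enn2real (g x) * indicator {a..b} x) = g x * indicator {a..b} x"
    by eventually_elim (auto simp: indicator_def less_top[symmetric] ennreal_enn2real)
  then have "(\<integral>\<^sup>+ x. ennreal (enn2real (g x) * indicator {a..b} x) \<partial>lborel) = ennreal I"
    using gI by (simp add: nn_integral_cong_AE)
  then have "((\<lambda>x. enn2real (g x) * indicator {a..b} x) has_integral I) UNIV"
    by (intro nn_integral_has_integral) (use g \<open>0 \<le> I\<close> in auto)
  moreover have "(\<lambda>x. enn2real (g x) * indicator {a..b} x) = (\<lambda>x. if x \<in> {a..b} then enn2real (g x) else 0)"
    by (auto simp: indicator_def)
  ultimately have "((\<lambda>x. if x \<in> {a..b} then enn2real (g x) else 0) has_integral I) UNIV"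
    by metis
  then show ?thesis by (simp only: has_integral_restrict_UNIV)
qed

lemma interval_measure_density_vanishes:
  fixes F :: "real \<Rightarrow> real"
  assumes mono: "\<And>a b. a \<le> b \<Longrightarrow> F a \<le> F b" and "continuous_on UNIV F"
    and g: "g \<in> borel_measurable lborel" and density: "density lborel g = interval_measure F"
    and "open W" and const: "\<And>a b. a \<le> b \<Longrightarrow> {a..b} \<subseteq> W \<Longrightarrow> F a = F b"
  shows "negligible {x\<in>W. enn2real (g x) \<noteq> 0}"
proof -
  obtain \<D> where \<D>: "countable \<D>" "\<D> \<subseteq> Pow W" "\<And>X. X \<in> \<D> \<Longrightarrow> \<exists>a b. X = cbox a b" "\<Union>\<D> = W"
    by (rule open_countable_Union_open_cbox[OF \<open>open W\<close>]) blast
  have "(\<Union>X\<in>\<D>. X) \<in> null_sets (interval_measure F)"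
  proof (rule null_sets_UN'[OF \<D>(1)])
    fix X assume "X \<in> \<D>"
    then obtain a b where X: "X = {a..b}" using \<D>(3) by (metis cbox_interval)
    show "X \<in> null_sets (interval_measure F)"
    proof (cases "a \<le> b")
      case True
      have "F a = F b" using X \<D>(2) \<open>X \<in> \<D>\<close> by (intro const[OF True]) auto
      then have "emeasure (interval_measure F) X = 0"
        using emeasure_interval_measure_Icc[OF True mono \<open>continuous_on UNIV F\<close>] X by simp
      then show ?thesis using X by (simp add: null_sets_def)
    qed (simp add: X)
  qed
  then have "emeasure (interval_measure F) W = 0"
    using \<D>(4) by (simp add: null_sets_def)
  then have "(\<integral>\<^sup>+ x. g x * indicator W x \<partial>lborel) = 0"
    using emeasure_density[OF g, of W] density \<open>open W\<close> by simp
  then have "AE x in lborel. g x * indicator W x = 0"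
    by (subst (asm) nn_integral_0_iff_AE) (use g \<open>open W\<close> in auto)
  then have "negligible {x. \<not> g x * indicator W x = 0}"
    by (rule negligible_if_AE_lborel)
  then show ?thesis
    by (rule negligible_subset) (auto simp: indicator_def)
qed

lemma monotone_lipschitz_density:
  fixes F :: "real \<Rightarrow> real"
  assumes mono: "\<And>a b. a \<le> b \<Longrightarrow> F a \<le> F b" and lip: "\<And>a b. a \<le> b \<Longrightarrow> F b - F a \<le> b - a"
  obtains f where "\<And>x. 0 \<le> f x" "f \<in> borel_measurable borel"
    "\<And>a b. a \<le> b \<Longrightarrow> (f has_integral (F b - F a)) {a..b}"
    "\<And>W. open W \<Longrightarrow> (\<And>a b. a \<le> b \<Longrightarrow> {a..b} \<subseteq> W \<Longrightarrow> F a = F b) \<Longrightarrow> negligible {x\<in>W. f x \<noteq> 0}"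
proof -
  have contF: "continuous_on UNIV F" by (rule monotone_lipschitz_continuous[OF mono lip])
  obtain g where g: "g \<in> borel_measurable lborel" and density: "density lborel g = interval_measure F"
    using sigma_finite_measure.Radon_Nikodym[OF sigma_finite_lborel
        interval_measure_absolutely_continuous[OF mono lip]] by auto
  show ?thesis
  proof
    show "0 \<le> enn2real (g x)" for x by simp
    show "(\<lambda>x. enn2real (g x)) \<in> borel_measurable borel" using g by simp
    show "((\<lambda>x. enn2real (g x)) has_integral (F b - F a)) {a..b}" if "a \<le> b" for a b
      using has_integral_enn2real_density[OF g] density emeasure_interval_measure_Icc[OF that mono contF]
        mono[OF that] by simp
    show "negligible {x\<in>W. enn2real (g x) \<noteq> 0}"
      if "open W" "\<And>a b. a \<le> b \<Longrightarrow> {a..b} \<subseteq> W \<Longrightarrow> F a = F b" for W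
      by (rule interval_measure_density_vanishes[OF mono contF g density that])
  qed
qed

lemma nn_integral_tail_eq:
  fixes f :: "real \<Rightarrow> real"
  assumes f: "f \<in> borel_measurable borel" "\<And>x. 0 \<le> f x" and "0 \<le> \<tau>"
    and J: "\<And>a. a \<in> {0..\<tau>} \<Longrightarrow> (f has_integral J a) {a..\<tau>}"
  shows "(\<integral>\<^sup>+ y. ennreal (f y) * indicator {0..\<tau>} y * indicator {x<..} y \<partial>lborel)
          = ennreal (J (min \<tau> (max 0 x)))"
proof -
  define a where "a = min \<tau> (max 0 x)"
  have a: "a \<in> {0..\<tau>}" using \<open>0 \<le> \<tau>\<close> by (auto simp: a_def)
  define S where "S = {0..\<tau>} \<inter> {x<..}"
  have "(f has_integral J a) S"
  proof (subst has_integral_spike_set_eq)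
    show "negligible {y \<in> S - {a..\<tau>}. f y \<noteq> 0}"
      by (rule negligible_subset[OF negligible_empty]) (auto simp: S_def a_def)
    show "negligible {y \<in> {a..\<tau>} - S. f y \<noteq> 0}"
      by (rule negligible_subset[OF negligible_sing[of a]]) (auto simp: S_def a_def)
  qed (rule J[OF a])
  then have "((\<lambda>y. if y \<in> S then f y else 0) has_integral J a) UNIV"
    by (simp only: has_integral_restrict_UNIV)
  moreover have "(\<lambda>y. if y \<in> S then f y else 0) = (\<lambda>y. f y * indicator S y)"
    by (auto simp: indicator_def)
  ultimately have "((\<lambda>y. f y * indicator S y) has_integral J a) UNIV" by simp
  then have "(\<integral>\<^sup>+ y. ennreal (f y * indicator S y) \<partial>lborel) = ennreal (J a)"
    using f by (intro nn_integral_has_integral_lborel) (auto simp: S_def)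
  moreover have "(\<lambda>y. ennreal (f y) * indicator {0..\<tau>} y * indicator {x<..} y) = (\<lambda>y. ennreal (f y * indicator S y))"
    by (auto simp: S_def indicator_def)
  ultimately show ?thesis by (simp add: a_def)
qed

lemma negligible_neq_if_eq_tail_integrals:
  fixes f1 f2 :: "real \<Rightarrow> real"
  assumes f1: "f1 \<in> borel_measurable borel" "\<And>x. 0 \<le> f1 x"
    and f2: "f2 \<in> borel_measurable borel" "\<And>x. 0 \<le> f2 x" and "0 \<le> \<tau>"
    and J1: "\<And>a. a \<in> {0..\<tau>} \<Longrightarrow> (f1 has_integral J a) {a..\<tau>}"
    and J2: "\<And>a. a \<in> {0..\<tau>} \<Longrightarrow> (f2 has_integral J a) {a..\<tau>}"
  shows "negligible {x\<in>{0..\<tau>}. f1 x \<noteq> f2 x}"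
proof -
  define g1 where "g1 y = ennreal (f1 y) * indicator {0..\<tau>} y" for y
  define g2 where "g2 y = ennreal (f2 y) * indicator {0..\<tau>} y" for y
  have g: "g1 \<in> borel_measurable lborel" "g2 \<in> borel_measurable lborel"
    unfolding g1_def[abs_def] g2_def[abs_def] using f1 f2 by simp_all
  have "emeasure (density lborel g1) {x<..} = ennreal (J (min \<tau> (max 0 x)))" for x
    using emeasure_density[OF g(1), of "{x<..}"] nn_integral_tail_eq[OF f1 \<open>0 \<le> \<tau>\<close> J1, of x]
    by (simp add: g1_def mult.assoc)
  moreover have "emeasure (density lborel g2) {x<..} = ennreal (J (min \<tau> (max 0 x)))" for x
    using emeasure_density[OF g(2), of "{x<..}"] nn_integral_tail_eq[OF f2 \<open>0 \<le> \<tau>\<close> J2, of x]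
    by (simp add: g2_def mult.assoc)
  ultimately have eq: "density lborel g1 = density lborel g2"
    by (intro measure_eqI_lessThan) simp_all
  have "integral\<^sup>N lborel g1 = (\<integral>\<^sup>+ y. ennreal (f1 y) * indicator {0..\<tau>} y * indicator {(-1)<..} y \<partial>lborel)"
    unfolding g1_def by (intro nn_integral_cong) (auto simp: indicator_def)
  then have "integral\<^sup>N lborel g1 \<noteq> \<infinity>"
    using nn_integral_tail_eq[OF f1 \<open>0 \<le> \<tau>\<close> J1] by simp
  then have "AE x in lborel. g1 x = g2 x"
    using finite_density_unique[OF g] eq by simp
  then have "negligible {x. g1 x \<noteq> g2 x}"
    by (rule negligible_if_AE_lborel)
  moreover have "{x\<in>{0..\<tau>}. f1 x \<noteq> f2 x} \<subseteq> {x. g1 x \<noteq> g2 x}"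
  proof
    fix x assume "x \<in> {x\<in>{0..\<tau>}. f1 x \<noteq> f2 x}"
    then show "x \<in> {x. g1 x \<noteq> g2 x}" using f1(2)[of x] f2(2)[of x] by (auto simp: g1_def g2_def)
  qed
  ultimately show ?thesis by (rule negligible_subset)
qed

section \<open>Limit sets and internal chain transitivity\<close>

lemma omega_limit_iff:
  fixes f :: "real \<Rightarrow> 'v::real_normed_vector"
  shows "p \<in> omega_limit f \<longleftrightarrow> (\<forall>T e. e > 0 \<longrightarrow> (\<exists>t\<ge>T. dist (f t) p < e))"
proof
  assume "p \<in> omega_limit f"
  then obtain s :: "nat \<Rightarrow> real" where s: "filterlim s at_top sequentially" "(\<lambda>n. f (s n)) \<longlonglongrightarrow> p"
    unfolding omega_limit_def by blast
  show "\<forall>T e. e > 0 \<longrightarrow> (\<exists>t\<ge>T. dist (f t) p < e)"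
  proof (intro allI impI)
    fix T e :: real assume "e > 0"
    have "eventually (\<lambda>n. s n \<ge> T \<and> dist (f (s n)) p < e) sequentially"
      using s(1) tendstoD[OF s(2) \<open>e > 0\<close>] by (simp add: filterlim_at_top eventually_conj)
    then show "\<exists>t\<ge>T. dist (f t) p < e"
      by (auto dest: eventually_happens)
  qed
next
  assume close: "\<forall>T e. e > 0 \<longrightarrow> (\<exists>t\<ge>T. dist (f t) p < e)"
  have "\<forall>n::nat. \<exists>t. t \<ge> real n \<and> dist (f t) p < 1 / (real n + 1)"
    using close by simp
  then obtain s where s: "\<And>n. s n \<ge> real n" "\<And>n. dist (f (s n)) p < 1 / (real n + 1)"
    by (auto dest!: choice)
  have "filterlim s at_top sequentially"
    by (rule filterlim_at_top_mono[OF filterlim_real_sequentially]) (simp add: s(1))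
  moreover have "(\<lambda>n. f (s n)) \<longlonglongrightarrow> p"
  proof (rule tendstoI)
    fix e :: real assume "e > 0"
    obtain N :: nat where N: "1 / e < real N" using reals_Archimedean2 by blast
    have "1 / (real n + 1) < e" if "n \<ge> N" for n
      using N that \<open>e > 0\<close> by (simp add: field_simps) (smt (verit) of_nat_mono mult_left_mono)
    then show "eventually (\<lambda>n. dist (f (s n)) p < e) sequentially"
      using s(2) by (auto simp: eventually_sequentially intro: less_trans)
  qed
  ultimately show "p \<in> omega_limit f" unfolding omega_limit_def by blast
qed

lemma omega_limit_eq_Inter:
  fixes f :: "real \<Rightarrow> 'v::real_normed_vector"
  shows "omega_limit f = (\<Inter>T. closure (f ` {T..}))"
  unfolding set_eq_iff omega_limit_iff by (auto simp: closure_approachable)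

lemma closed_omega_limit: "closed (omega_limit f)"
  unfolding omega_limit_eq_Inter by (intro closed_INT) auto

lemma incl_solution_restrict:
  assumes "incl_solution F z t" "0 \<le> t'" "t' \<le> t"
  shows "incl_solution F z t'"
proof -
  obtain w N where w: "w absolutely_integrable_on {0..t}"
    "\<forall>s\<in>{0..t}. (w has_integral (z s - z 0)) {0..s}" "negligible N" "\<forall>s\<in>{0..t} - N. w s \<in> F (z s)"
    using assms(1) unfolding incl_solution_def by blast
  have "w absolutely_integrable_on {0..t'}"
    by (rule absolutely_integrable_on_subinterval[OF w(1)]) (use assms in auto)
  then show ?thesis
    unfolding incl_solution_def using assms(2,3) w(2-4) by (intro conjI exI[of _ w] exI[of _ N]) auto
qed

lemma uniform_time_grid:
  assumes "T > 0" "a + T \<le> b"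
  obtains N :: nat and t where "N \<ge> 1" "T \<le> t" "t \<le> 2 * T" "a + real N * t = b"
proof
  define N where "N = nat \<lfloor>(b - a) / T\<rfloor>"
  have ge1: "(b - a) / T \<ge> 1" using assms by (simp add: field_simps)
  show "N \<ge> 1" using ge1 unfolding N_def by linarith
  have N: "real N \<le> (b - a) / T" "(b - a) / T < real N + 1" unfolding N_def using ge1 by linarith+
  then have "real N * T \<le> b - a" "b - a < real N * T + T"
    using assms(1) by (simp_all add: field_simps)
  moreover have "T \<le> real N * T" using \<open>N \<ge> 1\<close> assms(1) by simp
  ultimately have "b - a \<le> 2 * (real N * T)" by linarith
  moreover have "real N > 0" using \<open>N \<ge> 1\<close> by simp
  ultimately show "T \<le> (b - a) / real N" "(b - a) / real N \<le> 2 * T" "a + real N * ((b - a) / real N) = b"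
    using \<open>real N * T \<le> b - a\<close> by (simp_all add: field_simps)
qed

lemma chain_along_shadowing_solutions:
  fixes U :: "real \<Rightarrow> 'v::euclidean_space"
  assumes "N \<ge> 1" "T \<le> t" "t \<le> 2 * T"
    and sol: "\<And>i. i \<ge> 1 \<Longrightarrow> incl_solution F (z i) (2 * T) \<and> z i ` {0..2 * T} \<subseteq> L"
    and close: "\<And>i r. i \<ge> 1 \<Longrightarrow> r \<in> {0..2 * T} \<Longrightarrow> norm (U (a + (real i - 1) * t + r) - z i r) \<le> \<epsilon> / 2"
    and start: "dist (U a) p < \<epsilon> / 2" and stop: "dist (U (a + real N * t)) q < \<epsilon> / 2"
  shows "\<exists>n\<ge>1. \<exists>zs ts. (\<forall>i\<in>{1..n}. incl_solution F (zs i) (ts i) \<and> T \<le> ts i \<and> zs i ` {0..ts i} \<subseteq> L) \<and>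
      (\<forall>i\<in>{1..<n}. norm (zs i (ts i) - zs (Suc i) 0) \<le> \<epsilon>) \<and>
      norm (zs 1 0 - p) \<le> \<epsilon> \<and> norm (zs n (ts n) - q) \<le> \<epsilon>"
proof (intro exI[of _ N] exI[of _ z] exI[of _ "\<lambda>_. t"] conjI \<open>N \<ge> 1\<close>)
  have t_in: "t \<in> {0..2 * T}" "0 \<in> {0..2 * T}" using assms(2,3) by auto
  show "\<forall>i\<in>{1..N}. incl_solution F (z i) t \<and> T \<le> t \<and> z i ` {0..t} \<subseteq> L"
  proof
    fix i assume "i \<in> {1..N}"
    then have "incl_solution F (z i) (2 * T)" "z i ` {0..2 * T} \<subseteq> L" using sol by auto
    then show "incl_solution F (z i) t \<and> T \<le> t \<and> z i ` {0..t} \<subseteq> L"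
      using assms(2,3) t_in by (auto intro: incl_solution_restrict)
  qed
  show "\<forall>i\<in>{1..<N}. norm (z i t - z (Suc i) 0) \<le> \<epsilon>"
  proof
    fix i assume "i \<in> {1..<N}"
    let ?u = "U (a + (real i - 1) * t + t)"
    have shift: "a + (real (Suc i) - 1) * t + 0 = a + (real i - 1) * t + t" by (simp add: algebra_simps)
    have "norm (?u - z (Suc i) 0) \<le> \<epsilon> / 2"
      by (rule close[of "Suc i" 0, unfolded shift]) (use t_in in auto)
    moreover have "norm (?u - z i t) \<le> \<epsilon> / 2" using close[of i t] \<open>i \<in> {1..<N}\<close> t_in by simp
    ultimately show "norm (z i t - z (Suc i) 0) \<le> \<epsilon>"
      using norm_triangle_ineq[of "z i t - ?u" "?u - z (Suc i) 0"] by (simp add: norm_minus_commute)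
  qed
  show "norm (z 1 0 - p) \<le> \<epsilon>"
    using close[of 1 0] t_in start norm_triangle_ineq[of "z 1 0 - U a" "U a - p"]
    by (auto simp: dist_norm norm_minus_commute)
  have last: "a + (real N - 1) * t + t = a + real N * t" by (simp add: algebra_simps)
  have "norm (U (a + real N * t) - z N t) \<le> \<epsilon> / 2"
    by (rule close[of N t, unfolded last]) (use \<open>N \<ge> 1\<close> t_in in auto)
  then show "norm (z N t - q) \<le> \<epsilon>"
    using stop norm_triangle_ineq[of "z N t - U (a + real N * t)" "U (a + real N * t) - q"]
    by (simp add: dist_norm norm_minus_commute)
qed

text \<open>Chain the shadowing solutions along a uniform time grid, from a time where \<open>U\<close> is near
  \<open>p\<close> to a later one where it is near \<open>q\<close>.\<close>

lemma internally_chain_transitive_if_shadowed: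
  fixes U :: "real \<Rightarrow> 'v::euclidean_space"
  assumes "compact L"
    and approach: "\<And>p e S. p \<in> L \<Longrightarrow> e > 0 \<Longrightarrow> \<exists>s\<ge>S. dist (U s) p < e"
    and shadow: "\<And>\<delta> T. \<delta> > 0 \<Longrightarrow> T > 0 \<Longrightarrow> \<exists>S. \<forall>s\<ge>S. \<exists>z. incl_solution F z (2 * T) \<and>
      z ` {0..2 * T} \<subseteq> L \<and> (\<forall>r\<in>{0..2 * T}. norm (U (s + r) - z r) \<le> \<delta>)"
  shows "internally_chain_transitive F L"
  unfolding internally_chain_transitive_def
proof (intro conjI \<open>compact L\<close> ballI allI impI)
  fix p q assume "p \<in> L" "q \<in> L"
  fix \<epsilon> T :: real assume "\<epsilon> > 0" "T > 0"
  define P where "P s z \<longleftrightarrow> incl_solution F z (2 * T) \<and> z ` {0..2 * T} \<subseteq> L \<and>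
      (\<forall>r\<in>{0..2 * T}. norm (U (s + r) - z r) \<le> \<epsilon> / 2)" for s z
  have e2: "\<epsilon> / 2 > 0" using \<open>\<epsilon> > 0\<close> by simp
  then obtain S where S: "\<And>s. s \<ge> S \<Longrightarrow> \<exists>z. P s z"
    using shadow[of "\<epsilon> / 2" T] \<open>T > 0\<close> unfolding P_def by blast
  obtain a where a: "a \<ge> S" "dist (U a) p < \<epsilon> / 2" using approach[OF \<open>p \<in> L\<close> e2] by blast
  obtain b where b: "b \<ge> a + T" "dist (U b) q < \<epsilon> / 2" using approach[OF \<open>q \<in> L\<close> e2] by blast
  obtain N t where N: "N \<ge> 1" and t: "T \<le> t" "t \<le> 2 * T" and b_eq: "a + real N * t = b"
    using uniform_time_grid[OF \<open>T > 0\<close> b(1)] by blast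
  define z where "z i = (SOME z. P (a + (real i - 1) * t) z)" for i
  have z: "P (a + (real i - 1) * t) (z i)" if "i \<ge> 1" for i
  proof -
    have "0 \<le> (real i - 1) * t" using that \<open>T > 0\<close> t by simp
    then show ?thesis unfolding z_def using a(1) by (intro someI_ex[OF S]) simp
  qed
  have "dist (U (a + real N * t)) q < \<epsilon> / 2" using b(2) b_eq by simp
  with a(2) z show "\<exists>n\<ge>1. \<exists>zs ts. (\<forall>i\<in>{1..n}. incl_solution F (zs i) (ts i) \<and> T \<le> ts i \<and> zs i ` {0..ts i} \<subseteq> L) \<and>
      (\<forall>i\<in>{1..<n}. norm (zs i (ts i) - zs (Suc i) 0) \<le> \<epsilon>) \<and>
      norm (zs 1 0 - p) \<le> \<epsilon> \<and> norm (zs n (ts n) - q) \<le> \<epsilon>"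
    unfolding P_def by (intro chain_along_shadowing_solutions[OF N t]) auto
qed

section \<open>The dynamics in logarithmic time\<close>

definition profiles :: "((real^'a::finite) \<times> (real^'b::finite)) set" where
  "profiles = mixed_strats \<times> mixed_strats"

lemma norm_profile_le_2: "z \<in> profiles \<Longrightarrow> norm z \<le> 2"
  using norm_Pair_le[of "fst z" "snd z"] norm_mixed_strats_le_1[of "fst z"] norm_mixed_strats_le_1[of "snd z"]
  by (auto simp: profiles_def mem_Times_iff)

lemma compact_profiles: "compact profiles"
  unfolding profiles_def by (intro compact_Times compact_mixed_strats)

locale game =
  fixes A :: "'a::finite \<Rightarrow> 'b::finite \<Rightarrow> real" and B :: "'a \<Rightarrow> 'b \<Rightarrow> real"
    and h1 :: "real^'a \<Rightarrow> real" and h2 :: "real^'b \<Rightarrow> real"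
    and y :: "real \<Rightarrow> (real^'a) \<times> (real^'b)"
  assumes h1: "penalty h1" and h2: "penalty h2"
    and ode: "\<forall>t\<ge>0. (y has_vector_derivative
               (payvec1 A (choice h2 (snd (y t))), payvec2 B (choice h1 (fst (y t)))))
               (at t within {0..})"
begin

definition play :: "real \<Rightarrow> (real^'a) \<times> (real^'b)" where
  "play t = (choice h1 (fst (y t)), choice h2 (snd (y t)))"

definition payoff :: "(real^'a) \<times> (real^'b) \<Rightarrow> (real^'a) \<times> (real^'b)" where
  "payoff z = (payvec1 A (snd z), payvec2 B (fst z))"

definition avg :: "real \<Rightarrow> (real^'a) \<times> (real^'b)" where
  "avg t = (1 / t) *\<^sub>R integral {0..t} play"

definition avg_exp :: "real \<Rightarrow> (real^'a) \<times> (real^'b)" where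
  "avg_exp s = avg (exp s)"

definition play_exp :: "real \<Rightarrow> (real^'a) \<times> (real^'b)" where
  "play_exp s = play (exp s)"

lemma bounded_linear_payoff: "bounded_linear payoff"
  unfolding payoff_def[abs_def]
  by (intro bounded_linear_Pair bounded_linear_compose[OF bounded_linear_payvec1 bounded_linear_snd]
      bounded_linear_compose[OF bounded_linear_payvec2 bounded_linear_fst])

lemma play_in_profiles: "play t \<in> profiles"
  by (simp add: play_def profiles_def choice_argmax(1)[OF h1] choice_argmax(1)[OF h2])

lemma play_exp_in_profiles: "play_exp s \<in> profiles"
  by (simp add: play_exp_def play_in_profiles)

lemma y_has_derivative: "t \<ge> 0 \<Longrightarrow> (y has_vector_derivative payoff (play t)) (at t within {0..})"
  using ode by (simp add: payoff_def play_def)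

lemma continuous_on_play: "continuous_on {0..} play"
proof -
  have y: "continuous_on {0..} y"
    unfolding continuous_on_eq_continuous_within
    using y_has_derivative has_vector_derivative_continuous by (metis atLeast_iff)
  show ?thesis
    unfolding play_def[abs_def]
    by (intro continuous_on_Pair continuous_on_compose2[OF continuous_on_choice[OF h1] _ subset_UNIV]
        continuous_on_compose2[OF continuous_on_choice[OF h2] _ subset_UNIV] continuous_intros y)
qed

lemma play_has_integral: "t \<ge> 0 \<Longrightarrow> (play has_integral integral {0..t} play) {0..t}"
  by (intro integrable_integral integrable_continuous_real continuous_on_subset[OF continuous_on_play]) auto

lemma y_eq_avg:
  assumes "t > 0"
  shows "y t = y 0 + t *\<^sub>R payoff (avg t)"
proof -
  have "((\<lambda>s. payoff (play s)) has_integral (y t - y 0)) {0..t}"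
    using assms
    by (intro fundamental_theorem_of_calculus)
       (auto intro: has_vector_derivative_within_subset[OF y_has_derivative])
  moreover have "((\<lambda>s. payoff (play s)) has_integral payoff (integral {0..t} play)) {0..t}"
    using has_integral_linear[OF play_has_integral bounded_linear_payoff] assms by (simp add: o_def)
  ultimately have "y t = y 0 + payoff (integral {0..t} play)"
    by (metis add.commute diff_add_cancel has_integral_unique)
  moreover have "payoff (avg t) = (1/t) *\<^sub>R payoff (integral {0..t} play)"
    unfolding avg_def by (rule linear_scale[OF bounded_linear.linear[OF bounded_linear_payoff]])
  ultimately show ?thesis using assms by simp
qed

lemma avg_in_profiles:
  assumes "t > 0"
  shows "avg t \<in> profiles"
proof -
  have I: "(play has_integral integral {0..t} play) {0..t}" using play_has_integral assms by simp
  have "(1/t) *\<^sub>R fst (integral {0..t} play) \<in> mixed_strats"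
    using has_integral_linear[OF I bounded_linear_fst] play_in_profiles assms
    by (intro has_integral_average_in_mixed_strats[where a=0 and b=t, simplified])
       (auto simp: o_def profiles_def mem_Times_iff)
  moreover have "(1/t) *\<^sub>R snd (integral {0..t} play) \<in> mixed_strats"
    using has_integral_linear[OF I bounded_linear_snd] play_in_profiles assms
    by (intro has_integral_average_in_mixed_strats[where a=0 and b=t, simplified])
       (auto simp: o_def profiles_def mem_Times_iff)
  ultimately show ?thesis by (simp add: avg_def profiles_def mem_Times_iff)
qed

lemma avg_exp_in_profiles: "avg_exp s \<in> profiles"
  by (simp add: avg_exp_def avg_in_profiles)

lemma avg_has_derivative:
  assumes "t > 0"
  shows "(avg has_vector_derivative (1/t) *\<^sub>R (play t - avg t)) (at t)"
proof -
  have "((\<lambda>t. integral {0..t} play) has_vector_derivative play t) (at t within {0..t+1})"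
    by (rule integral_has_vector_derivative)
       (use assms continuous_on_subset[OF continuous_on_play] in auto)
  then have "((\<lambda>t. integral {0..t} play) has_vector_derivative play t) (at t within {0<..<t+1})"
    by (rule has_vector_derivative_within_subset) auto
  then have I: "((\<lambda>t. integral {0..t} play) has_vector_derivative play t) (at t)"
    by (subst (asm) has_vector_derivative_within_open) (use assms in auto)
  have "((\<lambda>t. 1 / t) has_real_derivative - (1 / t^2)) (at t)"
    using assms by (auto intro!: derivative_eq_intros simp: power2_eq_square field_simps)
  from has_vector_derivative_scaleR[OF this I]
  have "(avg has_vector_derivative (1/t) *\<^sub>R play t + (- (1/t^2)) *\<^sub>R integral {0..t} play) (at t)"
    unfolding avg_def[abs_def] .
  moreover have "(1/t) *\<^sub>R play t + (- (1/t^2)) *\<^sub>R integral {0..t} play = (1/t) *\<^sub>R (play t - avg t)"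
    unfolding avg_def by (simp add: algebra_simps power2_eq_square)
  ultimately show ?thesis by simp
qed

lemma avg_exp_has_derivative: "(avg_exp has_vector_derivative (play_exp s - avg_exp s)) (at s)"
proof -
  have "(exp has_vector_derivative exp s) (at s)"
    using DERIV_exp has_real_derivative_iff_has_vector_derivative by blast
  from vector_diff_chain_within[OF this has_vector_derivative_at_within[OF avg_has_derivative]]
  show ?thesis
    unfolding avg_exp_def[abs_def] play_exp_def by (simp add: o_def)
qed

lemma continuous_on_avg_exp: "continuous_on S avg_exp"
  using has_vector_derivative_continuous[OF avg_exp_has_derivative]
  by (intro continuous_at_imp_continuous_on) simp

lemma continuous_on_play_exp: "continuous_on S play_exp"
proof -
  have "continuous_on UNIV (\<lambda>s. play (exp s))"
    by (rule continuous_on_compose2[OF continuous_on_play continuous_on_exp[OF continuous_on_id]])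
       (auto simp: less_imp_le)
  then show ?thesis unfolding play_exp_def[abs_def] by (rule continuous_on_subset) auto
qed

lemma avg_exp_lipschitz: "4-lipschitz_on UNIV avg_exp"
proof -
  have bound: "norm (avg_exp b - avg_exp a) \<le> 4 * (b - a)" if "a \<le> b" for a b
  proof -
    have "((\<lambda>s. play_exp s - avg_exp s) has_integral (avg_exp b - avg_exp a)) {a..b}"
      using that by (intro fundamental_theorem_of_calculus)
        (auto intro: has_vector_derivative_at_within avg_exp_has_derivative)
    moreover have "norm (play_exp s - avg_exp s) \<le> 4" for s
      using norm_triangle_ineq4[of "play_exp s" "avg_exp s"]
        norm_profile_le_2[OF play_exp_in_profiles[of s]] norm_profile_le_2[OF avg_exp_in_profiles[of s]]
      by linarith
    ultimately have "norm (avg_exp b - avg_exp a) \<le> 4 * Henstock_Kurzweil_Integration.content {a..b}"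
      by (intro has_integral_bound_real[where S="{}"]) auto
    then show ?thesis using that by simp
  qed
  show ?thesis
  proof (rule lipschitz_onI)
    fix a b :: real
    show "dist (avg_exp a) (avg_exp b) \<le> 4 * dist a b"
    proof (cases "a \<le> b")
      case True
      then show ?thesis using bound[OF True] by (simp add: dist_norm norm_minus_commute)
    next
      case False
      then show ?thesis using bound[of b a] by (simp add: dist_norm)
    qed
  qed simp
qed

lemma play_exp_eq_choice:
  "fst (play_exp s) = choice h1 (fst (y 0) + exp s *\<^sub>R payvec1 A (snd (avg_exp s)))"
  "snd (play_exp s) = choice h2 (snd (y 0) + exp s *\<^sub>R payvec2 B (fst (avg_exp s)))"
  using y_eq_avg[of "exp s"] by (simp_all add: play_exp_def play_def payoff_def avg_exp_def)

lemma play_exp_approx_best_resp: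
  obtains C where
    "\<And>s p. p \<in> mixed_strats \<Longrightarrow>
       payvec1 A (snd (avg_exp s)) \<bullet> p - payvec1 A (snd (avg_exp s)) \<bullet> fst (play_exp s) \<le> C * exp (- s)"
    "\<And>s p. p \<in> mixed_strats \<Longrightarrow>
       payvec2 B (fst (avg_exp s)) \<bullet> p - payvec2 B (fst (avg_exp s)) \<bullet> snd (play_exp s) \<le> C * exp (- s)"
proof -
  obtain M1 where M1: "\<And>x. x \<in> mixed_strats \<Longrightarrow> \<bar>h1 x\<bar> \<le> M1" by (rule penalty_bounded[OF h1]) blast
  obtain M2 where M2: "\<And>x. x \<in> mixed_strats \<Longrightarrow> \<bar>h2 x\<bar> \<le> M2" by (rule penalty_bounded[OF h2]) blast
  define C where "C = 2 * norm (y 0) + 2 * max M1 M2"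
  have C: "2 * norm (fst (y 0)) + 2 * M1 \<le> C" "2 * norm (snd (y 0)) + 2 * M2 \<le> C"
    using norm_fst_le[of "fst (y 0)" "snd (y 0)"] norm_snd_le[of "snd (y 0)" "fst (y 0)"]
    by (simp_all add: C_def)
  have le_C: "X / exp s \<le> C * exp (- s)" if "X \<le> C" for X s
    using that by (simp add: exp_minus divide_inverse mult_right_mono)
  show ?thesis
  proof
    fix s
    show "payvec1 A (snd (avg_exp s)) \<bullet> p - payvec1 A (snd (avg_exp s)) \<bullet> fst (play_exp s) \<le> C * exp (- s)"
      if "p \<in> mixed_strats" for p
      unfolding play_exp_eq_choice
      using choice_approx_best_resp[OF h1 M1 exp_gt_zero that] le_C[OF C(1)]
      by (meson order_trans)
    show "payvec2 B (fst (avg_exp s)) \<bullet> p - payvec2 B (fst (avg_exp s)) \<bullet> snd (play_exp s) \<le> C * exp (- s)"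
      if "p \<in> mixed_strats" for p
      unfolding play_exp_eq_choice
      using choice_approx_best_resp[OF h2 M2 exp_gt_zero that] le_C[OF C(2)]
      by (meson order_trans)
  qed
qed

lemma play_exp_shift_integrable: "(\<lambda>\<rho>. play_exp (c + \<rho>)) integrable_on {a..b}"
  by (intro integrable_continuous_real continuous_on_compose2[OF continuous_on_play_exp[of UNIV]])
     (auto intro!: continuous_intros)

lemma avg_exp_shift_integrable: "(\<lambda>\<rho>. avg_exp (c + \<rho>)) integrable_on {a..b}"
  by (intro integrable_continuous_real continuous_on_compose2[OF continuous_on_avg_exp[of UNIV]])
     (auto intro!: continuous_intros)

lemma integral_play_exp_shift:
  assumes "a \<le> b"
  shows "integral {a..b} (\<lambda>\<rho>. play_exp (c + \<rho>))
    = avg_exp (c + b) - avg_exp (c + a) + integral {a..b} (\<lambda>\<rho>. avg_exp (c + \<rho>))"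
proof -
  have "((\<lambda>\<rho>. play_exp (c + \<rho>) - avg_exp (c + \<rho>)) has_integral (avg_exp (c + b) - avg_exp (c + a))) {a..b}"
  proof (rule fundamental_theorem_of_calculus[OF assms])
    fix x
    have "((\<lambda>\<rho>. c + \<rho>) has_vector_derivative 1) (at x within {a..b})"
      by (auto intro!: derivative_eq_intros simp: has_real_derivative_iff_has_vector_derivative[symmetric])
    from vector_diff_chain_within[OF this has_vector_derivative_at_within[OF avg_exp_has_derivative]]
    show "((\<lambda>\<rho>. avg_exp (c + \<rho>)) has_vector_derivative play_exp (c + x) - avg_exp (c + x)) (at x within {a..b})"
      by (simp add: o_def)
  qed
  then have "integral {a..b} (\<lambda>\<rho>. play_exp (c + \<rho>) - avg_exp (c + \<rho>)) = avg_exp (c + b) - avg_exp (c + a)"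
    by (rule integral_unique)
  then have "integral {a..b} (\<lambda>\<rho>. play_exp (c + \<rho>)) - integral {a..b} (\<lambda>\<rho>. avg_exp (c + \<rho>))
      = avg_exp (c + b) - avg_exp (c + a)"
    by (simp add: integral_diff[OF play_exp_shift_integrable avg_exp_shift_integrable])
  then show ?thesis by (simp add: diff_eq_eq)
qed

definition limit_set :: "((real^'a) \<times> (real^'b)) set" where
  "limit_set = omega_limit avg"

lemma limit_set_subset_profiles: "limit_set \<subseteq> profiles"
proof -
  have "limit_set \<subseteq> closure (avg ` {1..})"
    unfolding limit_set_def omega_limit_eq_Inter by blast
  also have "\<dots> \<subseteq> profiles"
    using avg_in_profiles compact_imp_closed[OF compact_profiles]
    by (intro closure_minimal) auto
  finally show ?thesis .
qed

lemma compact_limit_set: "compact limit_set"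
  using compact_Int_closed[OF compact_profiles closed_omega_limit[of avg]] limit_set_subset_profiles
  by (simp add: limit_set_def Int_absorb1)

lemma limit_set_approached:
  assumes "p \<in> limit_set" "e > 0"
  obtains s where "s \<ge> S" "dist (avg_exp s) p < e"
proof -
  obtain t where t: "t \<ge> exp S" "dist (avg t) p < e"
    using assms unfolding limit_set_def omega_limit_iff by blast
  then have "t > 0" by (smt (verit) exp_gt_zero)
  show ?thesis
  proof
    show "ln t \<ge> S" using t(1) \<open>t > 0\<close> by (metis exp_le_cancel_iff exp_ln)
    show "dist (avg_exp (ln t)) p < e" using t \<open>t > 0\<close> by (simp add: avg_exp_def)
  qed
qed

lemma shifted_limit_in_limit_set:
  assumes "filterlim s at_top sequentially" and "(\<lambda>n. avg_exp (s n + r)) \<longlonglongrightarrow> z"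
  shows "z \<in> limit_set"
proof -
  have "filterlim (\<lambda>n. s n + r) at_top sequentially"
    using filterlim_tendsto_add_at_top[OF tendsto_const assms(1)] by (simp add: add.commute)
  then have "filterlim (\<lambda>n. exp (s n + r)) at_top sequentially"
    by (rule filterlim_compose[OF exp_at_top])
  then show ?thesis
    using assms(2) unfolding limit_set_def omega_limit_def avg_exp_def by blast
qed

end

section \<open>Limits of shifted trajectories\<close>

text \<open>Along a sequence of shifts \<open>s n \<rightarrow> \<infinity>\<close> for which \<open>avg_exp (s n + \<cdot>)\<close> converges uniformly
  on \<open>[0, \<tau>]\<close> to \<open>Z\<close>, the integrals of \<open>play_exp (s n + \<cdot>)\<close> converge as well (by the
  relation \<open>play_exp = avg_exp' + avg_exp\<close>); their limit is \<open>limit_play_integral\<close>.\<close>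

locale shifted_limit = game A B h1 h2 y
  for A :: "'a::finite \<Rightarrow> 'b::finite \<Rightarrow> real" and B h1 h2 y +
  fixes s :: "nat \<Rightarrow> real" and \<tau> :: real and Z :: "real \<Rightarrow> (real^'a) \<times> (real^'b)"
  assumes s_at_top: "filterlim s at_top sequentially"
    and tau_pos: "\<tau> > 0"
    and continuous_on_Z: "continuous_on {0..\<tau>} Z"
    and uniform: "\<And>e. e > 0 \<Longrightarrow> \<exists>N. \<forall>n\<ge>N. \<forall>r\<in>{0..\<tau>}. norm (avg_exp (s n + r) - Z r) < e"
begin

definition limit_play_integral :: "real \<Rightarrow> real \<Rightarrow> (real^'a) \<times> (real^'b)" where
  "limit_play_integral a b = Z b - Z a + integral {a..b} Z"

lemma Z_integrable: "0 \<le> a \<Longrightarrow> b \<le> \<tau> \<Longrightarrow> Z integrable_on {a..b}"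
  by (rule integrable_continuous_real) (auto intro: continuous_on_subset[OF continuous_on_Z])

lemma avg_exp_shift_tendsto: "r \<in> {0..\<tau>} \<Longrightarrow> (\<lambda>n. avg_exp (s n + r)) \<longlonglongrightarrow> Z r"
  using uniform by (intro LIMSEQ_I) blast

lemma integral_avg_exp_shift_tendsto:
  assumes "0 \<le> a" "a \<le> b" "b \<le> \<tau>"
  shows "(\<lambda>n. integral {a..b} (\<lambda>\<rho>. avg_exp (s n + \<rho>))) \<longlonglongrightarrow> integral {a..b} Z"
proof (rule LIMSEQ_I)
  fix e :: real assume "e > 0"
  define e' where "e' = e / (b - a + 1)"
  have "e' > 0" using \<open>e > 0\<close> assms by (simp add: e'_def)
  then obtain N where N: "\<forall>n\<ge>N. \<forall>r\<in>{0..\<tau>}. norm (avg_exp (s n + r) - Z r) < e'"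
    using uniform by blast
  have "norm (integral {a..b} (\<lambda>\<rho>. avg_exp (s n + \<rho>)) - integral {a..b} Z) < e" if "n \<ge> N" for n
  proof -
    have "integral {a..b} (\<lambda>\<rho>. avg_exp (s n + \<rho>)) - integral {a..b} Z
        = integral {a..b} (\<lambda>\<rho>. avg_exp (s n + \<rho>) - Z \<rho>)"
      by (rule integral_diff[symmetric, OF avg_exp_shift_integrable Z_integrable]) (use assms in auto)
    moreover have "norm (integral {a..b} (\<lambda>\<rho>. avg_exp (s n + \<rho>) - Z \<rho>))
        \<le> e' * Henstock_Kurzweil_Integration.content {a..b}"
    proof (rule has_integral_bound_real[where S="{}"])
      show "((\<lambda>\<rho>. avg_exp (s n + \<rho>) - Z \<rho>) has_integral integral {a..b} (\<lambda>\<rho>. avg_exp (s n + \<rho>) - Z \<rho>)) {a..b}"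
        by (intro integrable_integral integrable_diff avg_exp_shift_integrable Z_integrable) (use assms in auto)
      show "\<And>x. x \<in> {a..b} - {} \<Longrightarrow> norm (avg_exp (s n + x) - Z x) \<le> e'"
        using N that assms by (meson atLeastAtMost_iff less_imp_le order_trans DiffD1)
    qed (use \<open>e' > 0\<close> in auto)
    moreover have "e' * Henstock_Kurzweil_Integration.content {a..b} < e"
      using assms \<open>e > 0\<close> by (simp add: e'_def field_simps)
    ultimately show ?thesis by simp
  qed
  then show "\<exists>N. \<forall>n\<ge>N. norm (integral {a..b} (\<lambda>\<rho>. avg_exp (s n + \<rho>)) - integral {a..b} Z) < e"
    by blast
qed

lemma integral_play_exp_shift_tendsto:
  assumes "0 \<le> a" "a \<le> b" "b \<le> \<tau>"
  shows "(\<lambda>n. integral {a..b} (\<lambda>\<rho>. play_exp (s n + \<rho>))) \<longlonglongrightarrow> limit_play_integral a b"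
  unfolding integral_play_exp_shift[OF assms(2)] limit_play_integral_def using assms
  by (intro tendsto_add tendsto_diff avg_exp_shift_tendsto integral_avg_exp_shift_tendsto) auto

lemma limit_play_integral_diff:
  assumes "0 \<le> a" "a \<le> b" "b \<le> \<tau>"
  shows "limit_play_integral 0 b - limit_play_integral 0 a = limit_play_integral a b"
proof -
  have "integral {0..a} Z + integral {a..b} Z = integral {0..b} Z"
    by (rule Henstock_Kurzweil_Integration.integral_combine) (use assms Z_integrable in auto)
  then show ?thesis unfolding limit_play_integral_def by (simp add: algebra_simps)
qed

lemma exp_neg_shift_tendsto: "(\<lambda>n. exp (- s n)) \<longlonglongrightarrow> 0"
  using filterlim_compose[OF exp_at_bot filterlim_uminus_at_top[THEN iffD1, OF s_at_top]] .

end

text \<open>One player's side of a shifted limit: \<open>proj\<close> selects the player's strategy from a profile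
  and \<open>pay\<close> the player's payoff vector against a profile.\<close>

locale shifted_player = shifted_limit A B h1 h2 y s \<tau> Z
  for A :: "'a::finite \<Rightarrow> 'b::finite \<Rightarrow> real" and B h1 h2 y s \<tau> Z +
  fixes proj :: "(real^'a) \<times> (real^'b) \<Rightarrow> real^'c::finite"
    and pay :: "(real^'a) \<times> (real^'b) \<Rightarrow> real^'c" and C :: real
  assumes bounded_linear_proj: "bounded_linear proj"
    and bounded_linear_pay: "bounded_linear pay"
    and proj_play_exp: "\<And>t. proj (play_exp t) \<in> mixed_strats"
    and approx_best_resp:
      "\<And>t p. p \<in> mixed_strats \<Longrightarrow> pay (avg_exp t) \<bullet> p - pay (avg_exp t) \<bullet> proj (play_exp t) \<le> C * exp (- t)"
begin

lemma proj_limit_play_integral_bounds: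
  assumes ab: "0 \<le> a" "a \<le> b" "b \<le> \<tau>"
  shows "0 \<le> proj (limit_play_integral a b) $ c" "proj (limit_play_integral a b) $ c \<le> b - a"
    "(\<Sum>c\<in>UNIV. proj (limit_play_integral a b) $ c) = b - a"
proof -
  define t where "t n = proj (integral {a..b} (\<lambda>\<rho>. play_exp (s n + \<rho>)))" for n
  have "t \<longlonglongrightarrow> proj (limit_play_integral a b)"
    unfolding t_def by (rule bounded_linear.tendsto[OF bounded_linear_proj integral_play_exp_shift_tendsto[OF ab]])
  then have tc: "(\<lambda>n. t n $ c) \<longlonglongrightarrow> proj (limit_play_integral a b) $ c" for c
    using bounded_linear.tendsto[OF bounded_linear_vec_nth] by blast
  have tn: "0 \<le> t n $ c \<and> t n $ c \<le> b - a \<and> (\<Sum>c\<in>UNIV. t n $ c) = b - a" for n c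
  proof (cases "a = b")
    case True
    then show ?thesis by (simp add: t_def linear_0[OF bounded_linear.linear[OF bounded_linear_proj]])
  next
    case False
    then have "a < b" using ab by simp
    have "((\<lambda>\<rho>. proj (play_exp (s n + \<rho>))) has_integral t n) {a..b}"
      unfolding t_def using has_integral_linear[OF integrable_integral[OF play_exp_shift_integrable] bounded_linear_proj]
      by (simp add: o_def)
    from has_integral_average_in_mixed_strats[OF this \<open>a < b\<close> proj_play_exp]
    have m: "(1 / (b - a)) *\<^sub>R t n \<in> mixed_strats" .
    have "t n $ c = (b - a) * ((1 / (b - a)) *\<^sub>R t n) $ c" using \<open>a < b\<close> by simp
    moreover have "(\<Sum>c\<in>UNIV. t n $ c) = (b - a) * (\<Sum>c\<in>UNIV. ((1 / (b - a)) *\<^sub>R t n) $ c)"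
      using \<open>a < b\<close> by (simp add: sum_divide_distrib[symmetric])
    ultimately show ?thesis
      using mixed_strats_nonneg[OF m, of c] mixed_strats_le_1[OF m, of c] mixed_strats_sum[OF m] \<open>a < b\<close>
      by (auto simp: mult_le_cancel_left1 zero_le_divide_iff)
  qed
  show "0 \<le> proj (limit_play_integral a b) $ c" by (rule LIMSEQ_le_const[OF tc]) (use tn in auto)
  show "proj (limit_play_integral a b) $ c \<le> b - a" by (rule LIMSEQ_le_const2[OF tc]) (use tn in auto)
  have "(\<lambda>n. \<Sum>c\<in>UNIV. t n $ c) \<longlonglongrightarrow> (\<Sum>c\<in>UNIV. proj (limit_play_integral a b) $ c)"
    by (intro tendsto_sum tc)
  then show "(\<Sum>c\<in>UNIV. proj (limit_play_integral a b) $ c) = b - a"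
    using tn by (simp add: LIMSEQ_const_iff)
qed

lemma pay_avg_exp_shift_close:
  assumes "e > 0"
  obtains N where "\<And>n r d. n \<ge> N \<Longrightarrow> r \<in> {0..\<tau>} \<Longrightarrow> \<bar>pay (avg_exp (s n + r)) $ d - pay (Z r) $ d\<bar> \<le> e"
proof -
  obtain K where "K > 0" and K: "\<And>z. norm (pay z) \<le> norm z * K"
    using bounded_linear.pos_bounded[OF bounded_linear_pay] by blast
  have "e / K > 0" using \<open>e > 0\<close> \<open>K > 0\<close> by simp
  then obtain N where N: "\<And>n r. n \<ge> N \<Longrightarrow> r \<in> {0..\<tau>} \<Longrightarrow> norm (avg_exp (s n + r) - Z r) < e / K"
    using uniform by blast
  have "\<bar>pay (avg_exp (s n + r)) $ d - pay (Z r) $ d\<bar> \<le> e" if "n \<ge> N" "r \<in> {0..\<tau>}" for n r d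
  proof -
    have "\<bar>pay (avg_exp (s n + r)) $ d - pay (Z r) $ d\<bar> \<le> norm (pay (avg_exp (s n + r) - Z r))"
      using component_le_norm_cart[of "pay (avg_exp (s n + r)) - pay (Z r)" d]
      by (simp add: linear_diff[OF bounded_linear.linear[OF bounded_linear_pay]])
    also have "\<dots> \<le> norm (avg_exp (s n + r) - Z r) * K" by (rule K)
    also have "\<dots> \<le> e / K * K"
      using N[OF that] \<open>K > 0\<close> by (intro mult_right_mono) auto
    finally show ?thesis using \<open>K > 0\<close> by simp
  qed
  then show ?thesis by (rule that)
qed

text \<open>If the action \<open>c\<close> is never a best response to \<open>Z\<close> on \<open>[a, b]\<close>, then for late shifts it is
  not even an approximate best response to \<open>avg_exp\<close>, so \<open>play_exp\<close> puts mass
  \<open>O(exp (- s n))\<close> on it.\<close>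

lemma shifted_play_component_small:
  assumes ab: "0 \<le> a" "a \<le> b" "b \<le> \<tau>"
    and gap: "\<And>r. r \<in> {a..b} \<Longrightarrow> \<exists>c'. pay (Z r) $ c < pay (Z r) $ c'"
  obtains \<kappa> N where "\<kappa> > 0"
    "\<And>n r. n \<ge> N \<Longrightarrow> r \<in> {a..b} \<Longrightarrow> proj (play_exp (s n + r)) $ c \<le> \<bar>C\<bar> * exp (- s n) / \<kappa>"
proof -
  have "continuous_on {a..b} (\<lambda>r. pay (Z r))"
    by (rule bounded_linear.continuous_on[OF bounded_linear_pay])
       (rule continuous_on_subset[OF continuous_on_Z], use ab in auto)
  then obtain \<eta> where "\<eta> > 0" and \<eta>: "\<And>r. r \<in> {a..b} \<Longrightarrow> \<exists>c'. \<eta> \<le> pay (Z r) $ c' - pay (Z r) $ c"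
    by (rule uniform_payoff_gap[where w="\<lambda>r. pay (Z r)" and c=c, OF _ ab(2) gap]) blast+
  have "\<eta> / 4 > 0" using \<open>\<eta> > 0\<close> by simp
  then obtain N where close:
    "\<And>n r d. n \<ge> N \<Longrightarrow> r \<in> {0..\<tau>} \<Longrightarrow> \<bar>pay (avg_exp (s n + r)) $ d - pay (Z r) $ d\<bar> \<le> \<eta> / 4"
    by (rule pay_avg_exp_shift_close) blast
  show ?thesis
  proof
    show "\<eta> / 2 > 0" using \<open>\<eta> > 0\<close> by simp
    fix n r assume n: "n \<ge> N" and r: "r \<in> {a..b}"
    let ?p = "proj (play_exp (s n + r))" and ?v = "pay (avg_exp (s n + r))"
    obtain c' where c': "\<eta> \<le> pay (Z r) $ c' - pay (Z r) $ c" using \<eta>[OF r] by blast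
    have "c \<noteq> c'" using c' \<open>\<eta> > 0\<close> by auto
    have "r \<in> {0..\<tau>}" using r ab by auto
    then have "\<eta> / 2 \<le> ?v $ c' - ?v $ c"
      using c' close[OF n, of r c] close[OF n, of r c'] unfolding abs_le_iff by linarith
    then have "?p $ c * (\<eta> / 2) \<le> ?p $ c * (?v $ c' - ?v $ c)"
      by (rule mult_left_mono[OF _ mixed_strats_nonneg[OF proj_play_exp]])
    also have "\<dots> \<le> C * exp (- (s n + r))"
      by (rule approx_best_resp_mass_bound[OF proj_play_exp \<open>c \<noteq> c'\<close> approx_best_resp])
    also have "\<dots> \<le> \<bar>C\<bar> * exp (- s n)"
      using \<open>r \<in> {0..\<tau>}\<close>
      by (intro order_trans[OF mult_right_mono[OF abs_ge_self] mult_left_mono]) auto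
    finally show "?p $ c \<le> \<bar>C\<bar> * exp (- s n) / (\<eta> / 2)"
      using \<open>\<eta> > 0\<close> by (simp add: field_simps)
  qed
qed

lemma proj_limit_play_integral_eq_0:
  assumes ab: "0 \<le> a" "a \<le> b" "b \<le> \<tau>"
    and gap: "\<And>r. r \<in> {a..b} \<Longrightarrow> \<exists>c'. pay (Z r) $ c < pay (Z r) $ c'"
  shows "proj (limit_play_integral a b) $ c = 0"
proof -
  obtain \<kappa> N where "\<kappa> > 0"
    and small: "\<And>n r. n \<ge> N \<Longrightarrow> r \<in> {a..b} \<Longrightarrow> proj (play_exp (s n + r)) $ c \<le> \<bar>C\<bar> * exp (- s n) / \<kappa>"
    using shifted_play_component_small[OF ab gap] by blast
  have bl: "bounded_linear (\<lambda>z. proj z $ c)"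
    using bounded_linear_compose[OF bounded_linear_vec_nth bounded_linear_proj] by (simp add: o_def)
  define t where "t n = proj (integral {a..b} (\<lambda>\<rho>. play_exp (s n + \<rho>))) $ c" for n
  have t: "t n = integral {a..b} (\<lambda>\<rho>. proj (play_exp (s n + \<rho>)) $ c)" for n
    using integral_linear[OF play_exp_shift_integrable bl] by (simp add: t_def o_def)
  have "t \<longlonglongrightarrow> proj (limit_play_integral a b) $ c"
    unfolding t_def by (rule bounded_linear.tendsto[OF bl integral_play_exp_shift_tendsto[OF ab]])
  moreover have "(\<lambda>n. (b - a) * \<bar>C\<bar> / \<kappa> * exp (- s n)) \<longlonglongrightarrow> 0"
    by (rule tendsto_mult_right_zero[OF exp_neg_shift_tendsto])
  moreover have "\<exists>N. \<forall>n\<ge>N. t n \<le> (b - a) * \<bar>C\<bar> / \<kappa> * exp (- s n)"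
  proof (intro exI[of _ N] allI impI)
    fix n assume "n \<ge> N"
    have "t n \<le> integral {a..b} (\<lambda>\<rho>. \<bar>C\<bar> * exp (- s n) / \<kappa>)"
      unfolding t
      using integrable_linear[OF play_exp_shift_integrable bl] small[OF \<open>n \<ge> N\<close>]
      by (intro integral_le) (auto simp: o_def)
    then show "t n \<le> (b - a) * \<bar>C\<bar> / \<kappa> * exp (- s n)" using ab by (simp add: ac_simps)
  qed
  ultimately have "proj (limit_play_integral a b) $ c \<le> 0"
    by (rule LIMSEQ_le)
  then show ?thesis using proj_limit_play_integral_bounds(1)[OF ab, of c] by linarith
qed

text \<open>The limit play is recovered as the derivative of the cumulative limit play; extending
  the cumulative functions constantly outside \<open>[0, \<tau>]\<close> makes them monotone and
  1-Lipschitz on the whole line.\<close>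

definition clamp :: "real \<Rightarrow> real" where
  "clamp r = min \<tau> (max 0 r)"

definition cumul :: "'c \<Rightarrow> real \<Rightarrow> real" where
  "cumul c r = proj (limit_play_integral 0 (clamp r)) $ c"

definition suboptimal_times :: "'c \<Rightarrow> real set" where
  "suboptimal_times c = {r \<in> {0<..<\<tau>}. \<exists>c'. pay (Z r) $ c < pay (Z r) $ c'}"

lemma clamp_in: "clamp r \<in> {0..\<tau>}"
  using tau_pos by (auto simp: clamp_def)

lemma clamp_mono: "a \<le> b \<Longrightarrow> clamp a \<le> clamp b"
  by (auto simp: clamp_def)

lemma clamp_eq: "r \<in> {0..\<tau>} \<Longrightarrow> clamp r = r"
  by (auto simp: clamp_def)

lemma cumul_diff:
  assumes "a \<le> b"
  shows "cumul c b - cumul c a = proj (limit_play_integral (clamp a) (clamp b)) $ c"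
proof -
  have "limit_play_integral 0 (clamp b) - limit_play_integral 0 (clamp a)
      = limit_play_integral (clamp a) (clamp b)"
    using clamp_in[of a] clamp_in[of b] clamp_mono[OF assms] by (intro limit_play_integral_diff) auto
  then have "proj (limit_play_integral 0 (clamp b)) - proj (limit_play_integral 0 (clamp a))
      = proj (limit_play_integral (clamp a) (clamp b))"
    by (simp flip: linear_diff[OF bounded_linear.linear[OF bounded_linear_proj]])
  then show ?thesis
    unfolding cumul_def by (simp flip: vector_minus_component)
qed

lemma cumul_mono: "a \<le> b \<Longrightarrow> cumul c a \<le> cumul c b"
  using cumul_diff[of a b c] proj_limit_play_integral_bounds(1)[of "clamp a" "clamp b" c]
    clamp_in[of a] clamp_in[of b] clamp_mono[of a b]
  by auto

lemma cumul_lipschitz: "a \<le> b \<Longrightarrow> cumul c b - cumul c a \<le> b - a"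
proof -
  assume "a \<le> b"
  have "clamp b - clamp a \<le> b - a" using \<open>a \<le> b\<close> by (auto simp: clamp_def)
  then show ?thesis
    using cumul_diff[OF \<open>a \<le> b\<close>, of c] clamp_in[of a] clamp_in[of b] clamp_mono[OF \<open>a \<le> b\<close>]
      proj_limit_play_integral_bounds(2)[of "clamp a" "clamp b" c] by auto
qed

lemma cumul_eq: "r \<in> {0..\<tau>} \<Longrightarrow> cumul c r = proj (limit_play_integral 0 r) $ c"
  by (simp add: cumul_def clamp_eq)

lemma sum_cumul_diff:
  assumes "a \<in> {0..\<tau>}"
  shows "(\<Sum>c\<in>UNIV. cumul c \<tau> - cumul c a) = \<tau> - a"
  using proj_limit_play_integral_bounds(3)[of a \<tau>] assms tau_pos
  by (simp add: cumul_diff clamp_eq)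

lemma open_suboptimal_times: "open (suboptimal_times c)"
proof -
  have "continuous_on {0<..<\<tau>} (\<lambda>r. pay (Z r))"
    by (rule bounded_linear.continuous_on[OF bounded_linear_pay])
       (rule continuous_on_subset[OF continuous_on_Z], auto)
  moreover have "open {v::real^'c. \<exists>c'. v $ c < v $ c'}"
  proof -
    have "{v::real^'c. \<exists>c'. v $ c < v $ c'} = (\<Union>c'. {v. v $ c < v $ c'})" by auto
    moreover have "open {v::real^'c. v $ c < v $ c'}" for c'
      by (intro open_Collect_less continuous_intros)
    ultimately show ?thesis by auto
  qed
  ultimately have "open ((\<lambda>r. pay (Z r)) -` {v::real^'c. \<exists>c'. v $ c < v $ c'} \<inter> {0<..<\<tau>})"
    using continuous_on_open_vimage[of "{0<..<\<tau>}" "\<lambda>r. pay (Z r)"] by auto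
  moreover have "(\<lambda>r. pay (Z r)) -` {v. \<exists>c'. v $ c < v $ c'} \<inter> {0<..<\<tau>} = suboptimal_times c"
    by (auto simp: suboptimal_times_def)
  ultimately show ?thesis by simp
qed

lemma cumul_const_on_suboptimal_times:
  assumes "a \<le> b" "{a..b} \<subseteq> suboptimal_times c"
  shows "cumul c a = cumul c b"
proof -
  have ab: "0 < a" "b < \<tau>" using assms by (auto simp: suboptimal_times_def)
  have "cumul c b - cumul c a = proj (limit_play_integral a b) $ c"
    using cumul_diff[OF assms(1)] ab assms(1) by (simp add: clamp_eq)
  also have "\<dots> = 0"
    using ab assms by (intro proj_limit_play_integral_eq_0) (auto simp: suboptimal_times_def)
  finally show ?thesis by simp
qed

lemma cumul_densities:
  obtains f where "\<And>c x. 0 \<le> f c x" "\<And>c. f c \<in> borel_measurable borel"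
    "\<And>c a b. a \<le> b \<Longrightarrow> (f c has_integral (cumul c b - cumul c a)) {a..b}"
    "\<And>c. negligible {x\<in>suboptimal_times c. f c x \<noteq> 0}"
proof -
  have "\<forall>c. \<exists>f. (\<forall>x. 0 \<le> f x) \<and> f \<in> borel_measurable borel \<and>
      (\<forall>a b. a \<le> b \<longrightarrow> (f has_integral (cumul c b - cumul c a)) {a..b}) \<and>
      negligible {x\<in>suboptimal_times c. f x \<noteq> 0}"
  proof
    fix c
    obtain f where f: "\<And>x. 0 \<le> f x" "f \<in> borel_measurable borel"
      "\<And>a b. a \<le> b \<Longrightarrow> (f has_integral (cumul c b - cumul c a)) {a..b}"
      "\<And>W. open W \<Longrightarrow> (\<And>a b. a \<le> b \<Longrightarrow> {a..b} \<subseteq> W \<Longrightarrow> cumul c a = cumul c b)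
          \<Longrightarrow> negligible {x\<in>W. f x \<noteq> 0}"
      by (rule monotone_lipschitz_density[OF cumul_mono cumul_lipschitz]) blast+
    have "negligible {x\<in>suboptimal_times c. f x \<noteq> 0}"
      by (rule f(4)[OF open_suboptimal_times cumul_const_on_suboptimal_times])
    with f(1-3) show "\<exists>f. (\<forall>x. 0 \<le> f x) \<and> f \<in> borel_measurable borel \<and>
        (\<forall>a b. a \<le> b \<longrightarrow> (f has_integral (cumul c b - cumul c a)) {a..b}) \<and>
        negligible {x\<in>suboptimal_times c. f x \<noteq> 0}"
      by blast
  qed
  then obtain f where "\<forall>c. (\<forall>x. 0 \<le> f c x) \<and> f c \<in> borel_measurable borel \<and>
      (\<forall>a b. a \<le> b \<longrightarrow> (f c has_integral (cumul c b - cumul c a)) {a..b}) \<and>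
      negligible {x\<in>suboptimal_times c. f c x \<noteq> 0}"
    by (rule choice[THEN exE]) blast
  then show ?thesis using that by blast
qed

lemma negligible_sum_density_neq_1:
  assumes f: "\<And>c x. 0 \<le> f c x" "\<And>c. f c \<in> borel_measurable borel"
    "\<And>c a b. a \<le> b \<Longrightarrow> (f c has_integral (cumul c b - cumul c a)) {a..b}"
  shows "negligible {x\<in>{0..\<tau>}. (\<Sum>c\<in>UNIV. f c x) \<noteq> 1}"
proof (rule negligible_neq_if_eq_tail_integrals[where J="\<lambda>a. \<tau> - a"])
  fix a :: real assume a: "a \<in> {0..\<tau>}"
  have "((\<lambda>x. \<Sum>c\<in>UNIV. f c x) has_integral (\<Sum>c\<in>UNIV. cumul c \<tau> - cumul c a)) {a..\<tau>}"
    using f(3) a by (intro has_integral_sum) auto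
  then show "((\<lambda>x. \<Sum>c\<in>UNIV. f c x) has_integral (\<tau> - a)) {a..\<tau>}"
    using sum_cumul_diff[OF a] by simp
  show "((\<lambda>x. 1::real) has_integral (\<tau> - a)) {a..\<tau>}"
    using has_integral_const_real[of "1::real" a \<tau>] a by simp
qed (use f(1,2) tau_pos in \<open>auto intro: sum_nonneg\<close>)

lemma cumul_density_vector:
  assumes f: "\<And>c x. 0 \<le> f c x"
    "\<And>c a b. a \<le> b \<Longrightarrow> (f c has_integral (cumul c b - cumul c a)) {a..b}"
  shows "(\<lambda>r. \<chi> c. f c r) absolutely_integrable_on {0..\<tau>}"
    and "r \<in> {0..\<tau>} \<Longrightarrow> ((\<lambda>r. \<chi> c. f c r) has_integral proj (limit_play_integral 0 r)) {0..r}"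
proof -
  have p_inner: "(\<chi> c. f c x) \<bullet> b = f (axis_index b) x" if "b \<in> Basis" for x b
    by (subst axis_index[OF that]) (simp add: inner_axis)
  show "(\<lambda>r. \<chi> c. f c r) absolutely_integrable_on {0..\<tau>}"
  proof (rule absolutely_integrable_componentwise)
    fix b :: "real^'c" assume b: "b \<in> Basis"
    have "f (axis_index b) integrable_on {0..\<tau>}"
      using f(2)[of 0 \<tau>] tau_pos by (auto intro: has_integral_integrable)
    then have "f (axis_index b) absolutely_integrable_on {0..\<tau>}"
      by (rule nonnegative_absolutely_integrable_1) (use f(1) in auto)
    then show "(\<lambda>x. (\<chi> c. f c x) \<bullet> b) absolutely_integrable_on {0..\<tau>}" using p_inner[OF b] by simp
  qed
  assume r: "r \<in> {0..\<tau>}"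
  have cumul_0: "cumul c 0 = 0" for c
    using tau_pos linear_0[OF bounded_linear.linear[OF bounded_linear_proj]]
    by (simp add: cumul_eq limit_play_integral_def)
  show "((\<lambda>r. \<chi> c. f c r) has_integral proj (limit_play_integral 0 r)) {0..r}"
  proof (rule has_integral_componentwise)
    fix b :: "real^'c" assume b: "b \<in> Basis"
    have "proj (limit_play_integral 0 r) \<bullet> b = proj (limit_play_integral 0 r) $ (axis_index b)"
      by (subst axis_index[OF b]) (simp add: inner_axis)
    then show "((\<lambda>x. (\<chi> c. f c x) \<bullet> b) has_integral proj (limit_play_integral 0 r) \<bullet> b) {0..r}"
      using f(2)[of 0 r "axis_index b"] r p_inner[OF b] by (simp add: cumul_0 cumul_eq)
  qed
qed

lemma limit_play_density:
  obtains p N where "negligible N" "p absolutely_integrable_on {0..\<tau>}"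
    "\<And>r. r \<in> {0..\<tau>} \<Longrightarrow> (p has_integral proj (limit_play_integral 0 r)) {0..r}"
    "\<And>r. r \<in> {0..\<tau>} - N \<Longrightarrow> p r \<in> best_resp (pay (Z r))"
proof -
  obtain f where f: "\<And>c x. 0 \<le> f c x" "\<And>c. f c \<in> borel_measurable borel"
    "\<And>c a b. a \<le> b \<Longrightarrow> (f c has_integral (cumul c b - cumul c a)) {a..b}"
    "\<And>c. negligible {x\<in>suboptimal_times c. f c x \<noteq> 0}"
    by (rule cumul_densities) blast
  define N where "N = {0, \<tau>} \<union> {x\<in>{0..\<tau>}. (\<Sum>c\<in>UNIV. f c x) \<noteq> 1}
      \<union> (\<Union>c. {x\<in>suboptimal_times c. f c x \<noteq> 0})"
  have "negligible N"
    unfolding N_def using negligible_sum_density_neq_1[OF f(1-3)] f(4)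
    by (intro negligible_Un negligible_Union) auto
  moreover have "(\<chi> c. f c r) \<in> best_resp (pay (Z r))" if r: "r \<in> {0..\<tau>} - N" for r
  proof (rule best_resp_if_support_maximal)
    have r': "0 < r" "r < \<tau>" "(\<Sum>c\<in>UNIV. f c r) = 1" using r by (auto simp: N_def)
    show "(\<chi> c. f c r) \<in> mixed_strats" using r'(3) f(1) by (simp add: mixed_strats_def)
    fix c c' assume "(\<chi> c. f c r) $ c \<noteq> 0"
    then have "r \<notin> suboptimal_times c" using r by (auto simp: N_def)
    then show "pay (Z r) $ c' \<le> pay (Z r) $ c" using r' by (auto simp: suboptimal_times_def not_less)
  qed
  ultimately show ?thesis
    using that[of N "\<lambda>r. \<chi> c. f c r"] cumul_density_vector[OF f(1,3)] by blast
qed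

end

context shifted_limit
begin

lemma limit_play_density_fst:
  obtains p N where "negligible N" "p absolutely_integrable_on {0..\<tau>}"
    "\<And>r. r \<in> {0..\<tau>} \<Longrightarrow> (p has_integral fst (limit_play_integral 0 r)) {0..r}"
    "\<And>r. r \<in> {0..\<tau>} - N \<Longrightarrow> p r \<in> best_resp (payvec1 A (snd (Z r)))"
proof -
  obtain C where C: "\<And>t p. p \<in> mixed_strats \<Longrightarrow>
       payvec1 A (snd (avg_exp t)) \<bullet> p - payvec1 A (snd (avg_exp t)) \<bullet> fst (play_exp t) \<le> C * exp (- t)"
    by (rule play_exp_approx_best_resp) blast
  interpret shifted_player A B h1 h2 y s \<tau> Z fst "\<lambda>z. payvec1 A (snd z)" C
  proof (intro shifted_player.intro shifted_limit_axioms shifted_player_axioms.intro)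
    show "bounded_linear (\<lambda>z. payvec1 A (snd z))"
      by (rule bounded_linear_compose[OF bounded_linear_payvec1 bounded_linear_snd])
    show "fst (play_exp t) \<in> mixed_strats" for t
      using play_exp_in_profiles[of t] by (auto simp: profiles_def mem_Times_iff)
  qed (fact bounded_linear_fst C)+
  show ?thesis by (rule limit_play_density) (rule that)
qed

lemma limit_play_density_snd:
  obtains p N where "negligible N" "p absolutely_integrable_on {0..\<tau>}"
    "\<And>r. r \<in> {0..\<tau>} \<Longrightarrow> (p has_integral snd (limit_play_integral 0 r)) {0..r}"
    "\<And>r. r \<in> {0..\<tau>} - N \<Longrightarrow> p r \<in> best_resp (payvec2 B (fst (Z r)))"
proof -
  obtain C where C: "\<And>t p. p \<in> mixed_strats \<Longrightarrow>
       payvec2 B (fst (avg_exp t)) \<bullet> p - payvec2 B (fst (avg_exp t)) \<bullet> snd (play_exp t) \<le> C * exp (- t)"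
    by (rule play_exp_approx_best_resp) blast
  interpret shifted_player A B h1 h2 y s \<tau> Z snd "\<lambda>z. payvec2 B (fst z)" C
  proof (intro shifted_player.intro shifted_limit_axioms shifted_player_axioms.intro)
    show "bounded_linear (\<lambda>z. payvec2 B (fst z))"
      by (rule bounded_linear_compose[OF bounded_linear_payvec2 bounded_linear_fst])
    show "snd (play_exp t) \<in> mixed_strats" for t
      using play_exp_in_profiles[of t] by (auto simp: profiles_def mem_Times_iff)
  qed (fact bounded_linear_snd C)+
  show ?thesis by (rule limit_play_density) (rule that)
qed

lemma incl_solution_limit: "incl_solution (br_field A B) Z \<tau>"
proof -
  obtain p1 N1 where p1: "negligible N1" "p1 absolutely_integrable_on {0..\<tau>}"
      "\<And>r. r \<in> {0..\<tau>} \<Longrightarrow> (p1 has_integral fst (limit_play_integral 0 r)) {0..r}"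
      "\<And>r. r \<in> {0..\<tau>} - N1 \<Longrightarrow> p1 r \<in> best_resp (payvec1 A (snd (Z r)))"
    by (rule limit_play_density_fst) blast
  obtain p2 N2 where p2: "negligible N2" "p2 absolutely_integrable_on {0..\<tau>}"
      "\<And>r. r \<in> {0..\<tau>} \<Longrightarrow> (p2 has_integral snd (limit_play_integral 0 r)) {0..r}"
      "\<And>r. r \<in> {0..\<tau>} - N2 \<Longrightarrow> p2 r \<in> best_resp (payvec2 B (fst (Z r)))"
    by (rule limit_play_density_snd) blast
  define w where "w r = (p1 r, 0) + (0, p2 r) - Z r" for r
  have inl: "bounded_linear (\<lambda>x::real^'a. (x, 0::real^'b))"
    and inr: "bounded_linear (\<lambda>x::real^'b. (0::real^'a, x))"
    by (intro bounded_linear_Pair bounded_linear_ident bounded_linear_zero)+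
  have "w absolutely_integrable_on {0..\<tau>}"
    unfolding w_def
    using absolutely_integrable_linear[OF p1(2) inl] absolutely_integrable_linear[OF p2(2) inr]
      absolutely_integrable_continuous_real[OF continuous_on_Z]
    by (intro set_integral_diff(1) set_integral_add(1)) (auto simp: o_def)
  moreover have "(w has_integral (Z r - Z 0)) {0..r}" if r: "r \<in> {0..\<tau>}" for r
  proof -
    have "(w has_integral ((fst (limit_play_integral 0 r), 0) + (0, snd (limit_play_integral 0 r))
        - integral {0..r} Z)) {0..r}"
      unfolding w_def
      using has_integral_linear[OF p1(3)[OF r] inl] has_integral_linear[OF p2(3)[OF r] inr]
        integrable_integral[OF Z_integrable, of 0 r] r
      by (intro has_integral_diff has_integral_add) (auto simp: o_def)
    moreover have "(fst (limit_play_integral 0 r), 0) + (0, snd (limit_play_integral 0 r))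
        - integral {0..r} Z = Z r - Z 0"
      by (simp add: limit_play_integral_def prod_eq_iff)
    ultimately show ?thesis by simp
  qed
  moreover have "w r \<in> br_field A B (Z r)" if "r \<in> {0..\<tau>} - (N1 \<union> N2)" for r
  proof -
    have "w r = (p1 r - fst (Z r), p2 r - snd (Z r))" by (simp add: w_def prod_eq_iff)
    then show ?thesis
      using p1(4)[of r] p2(4)[of r] that unfolding br_field_def by blast
  qed
  ultimately show ?thesis
    unfolding incl_solution_def
    using tau_pos negligible_Un[OF p1(1) p2(1)] by (intro conjI exI[of _ w] exI[of _ "N1 \<union> N2"]) auto
qed

end

section \<open>Shadowing and the main theorem\<close>

context game
begin

text \<open>Arzela--Ascoli: the shifted curves \<open>avg_exp (s n + \<cdot>)\<close> are uniformly bounded and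
  uniformly Lipschitz.\<close>

lemma shifted_limit_subseq:
  assumes "filterlim s at_top sequentially" "\<tau> > 0"
  obtains k Z where "shifted_limit A B h1 h2 y (s \<circ> k) \<tau> Z"
proof -
  obtain Z k where Z: "continuous_on {0..\<tau>} Z" "strict_mono (k :: nat \<Rightarrow> nat)"
    "\<And>e. 0 < e \<Longrightarrow> \<exists>N. \<forall>n r. n \<ge> N \<and> r \<in> {0..\<tau>} \<longrightarrow> norm (avg_exp (s (k n) + r) - Z r) < e"
  proof (rule Arzela_Ascoli[of "{0..\<tau>}" "\<lambda>n r. avg_exp (s n + r)" 2])
    show "norm (avg_exp (s n + r)) \<le> 2" for n r
      using norm_profile_le_2[OF avg_exp_in_profiles] .
    fix r e :: real assume "0 < e"
    show "\<exists>d>0. \<forall>n r'. r' \<in> {0..\<tau>} \<and> norm (r - r') < d \<longrightarrow> norm (avg_exp (s n + r) - avg_exp (s n + r')) < e"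
    proof (intro exI[of _ "e / 4"] conjI allI impI)
      fix n r' assume "r' \<in> {0..\<tau>} \<and> norm (r - r') < e / 4"
      then show "norm (avg_exp (s n + r) - avg_exp (s n + r')) < e"
        using lipschitz_on_normD[OF avg_exp_lipschitz, of "s n + r" "s n + r'"] by simp
    qed (use \<open>0 < e\<close> in simp)
  qed auto
  have "filterlim (s \<circ> k) at_top sequentially"
    using filterlim_compose[OF assms(1) filterlim_subseq[OF Z(2)]] by (simp add: o_def)
  moreover have "\<exists>N. \<forall>n\<ge>N. \<forall>r\<in>{0..\<tau>}. norm (avg_exp ((s \<circ> k) n + r) - Z r) < e" if "e > 0" for e
    using Z(3)[OF that] by (simp add: Ball_def) blast
  ultimately have "shifted_limit A B h1 h2 y (s \<circ> k) \<tau> Z"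
    using Z(1) assms(2) by (intro shifted_limit.intro game_axioms shifted_limit_axioms.intro)
  then show ?thesis by (rule that)
qed

text \<open>By contradiction: a uniform limit of unshadowed stretches would itself be a shadowing
  solution, by \<open>incl_solution_limit\<close>.\<close>

lemma avg_exp_shadowed:
  assumes "\<delta> > 0" "T > 0"
  shows "\<exists>S. \<forall>s\<ge>S. \<exists>z. incl_solution (br_field A B) z (2 * T) \<and> z ` {0..2 * T} \<subseteq> limit_set \<and>
           (\<forall>r\<in>{0..2 * T}. norm (avg_exp (s + r) - z r) \<le> \<delta>)"
proof (rule ccontr)
  define P where "P s \<longleftrightarrow> (\<exists>z. incl_solution (br_field A B) z (2 * T) \<and> z ` {0..2 * T} \<subseteq> limit_set \<and>
           (\<forall>r\<in>{0..2 * T}. norm (avg_exp (s + r) - z r) \<le> \<delta>))" for s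
  assume "\<not> ?thesis"
  then have "\<forall>n::nat. \<exists>s. s \<ge> real n \<and> \<not> P s" unfolding P_def by (meson not_le_imp_less)
  then obtain sq where sq: "\<And>n. sq n \<ge> real n" "\<And>n. \<not> P (sq n)" by metis
  have "filterlim sq at_top sequentially"
    by (rule filterlim_at_top_mono[OF filterlim_real_sequentially]) (simp add: sq(1))
  then obtain k Z where lim: "shifted_limit A B h1 h2 y (sq \<circ> k) (2 * T) Z"
    using shifted_limit_subseq \<open>T > 0\<close> by (metis mult_pos_pos zero_less_numeral)
  interpret L: shifted_limit A B h1 h2 y "sq \<circ> k" "2 * T" Z by (rule lim)
  have "Z ` {0..2 * T} \<subseteq> limit_set"
    using shifted_limit_in_limit_set[OF L.s_at_top L.avg_exp_shift_tendsto] by blast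
  moreover obtain N where "\<forall>n\<ge>N. \<forall>r\<in>{0..2 * T}. norm (avg_exp ((sq \<circ> k) n + r) - Z r) < \<delta>"
    using L.uniform[OF \<open>\<delta> > 0\<close>] by blast
  ultimately have "P (sq (k N))"
    unfolding P_def using L.incl_solution_limit by (intro exI[of _ Z]) (auto intro: less_imp_le)
  then show False using sq(2) by blast
qed

lemma limit_set_internally_chain_transitive: "internally_chain_transitive (br_field A B) limit_set"
proof (rule internally_chain_transitive_if_shadowed[OF compact_limit_set])
  show "\<exists>s\<ge>S. dist (avg_exp s) p < e" if "p \<in> limit_set" "e > 0" for p e S
    using limit_set_approached[OF that] by metis
qed (use avg_exp_shadowed in blast)

end

theorem theorem6p3:
  fixes A B :: "'a::finite \<Rightarrow> 'b::finite \<Rightarrow> real"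
    and h1 :: "real^'a \<Rightarrow> real" and h2 :: "real^'b \<Rightarrow> real"
    and y :: "real \<Rightarrow> (real^'a) \<times> (real^'b)"
  assumes h1: "penalty h1" and h2: "penalty h2"
    and ode: "\<forall>t\<ge>0. (y has_vector_derivative
               (payvec1 A (choice h2 (snd (y t))), payvec2 B (choice h1 (fst (y t)))))
               (at t within {0..})"
  shows "internally_chain_transitive (br_field A B)
           (omega_limit (\<lambda>t. (1 / t) *\<^sub>R
              integral {0..t} (\<lambda>s. (choice h1 (fst (y s)), choice h2 (snd (y s))))))"
proof -
  interpret game A B h1 h2 y by (rule game.intro[OF h1 h2 ode])
  have "(\<lambda>t. (1 / t) *\<^sub>R integral {0..t} (\<lambda>s. (choice h1 (fst (y s)), choice h2 (snd (y s))))) = avg"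
    by (simp add: fun_eq_iff avg_def play_def[abs_def])
  then show ?thesis
    using limit_set_internally_chain_transitive by (simp add: limit_set_def)
qed

end
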